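(* Let $(\mathcal M_\rho)_{\rho>0}$, $\mathcal M_\rho:\mathcal X\to\mathcal Y$, be a family of mechanisms that can be decomposed as $\mathcal M_\rho=H\circ\mathcal A_{f,\rho}$, where $\mathcal A_{f,\rho}(x)=f(x)+Z$ is an independent additive noise mechanism for some $f:\mathcal X\to\mathbb{R}^d$, with $Z\in\mathbb{R}^d$ having i.i.d. coordinates distributed as $\mathcal D(\rho)$ for a family $(\mathcal D(\rho))_{\rho>0}$ satisfying a convolution preorder, and $H:\mathbb{R}^d\to\mathcal Y$ is an invertible function. Then $(\mathcal M_\rho)$ can be implemented with lossless multiple release.
   Context: Convolution preorder: a family $(\mathcal D(\rho))_{\rho\in\mathbb{R}_+}$ of real-valued distributions satisfies a convolution preorder if for all $\rho_1<\rho_2$ there is a distribution $\mathcal C(\rho_2,\rho_1)$ with $\mathcal D(\rho_2)*\mathcal C(\rho_2,\rho_1)=\mathcal D(\rho_1)$ ($*$ denotes convolution). Lossless multiple release: let $(\mathcal M_\rho)_{\rho>0}$ be a family of randomized mechanisms $\mathcal X\to\mathcal Y$. An implementation is a randomized stateful procedure $\textsc M$ which, given $x\in\mathcal X$, receives privacy parameters $\rho\in\mathbb{R}_+$ one at a time in arbitrary order and outputs $\textsc M(x,\rho)\in\mathcal Y$ for each. $\textsc M$ implements $(\mathcal M_\rho)$ with lossless multiple release if for every $x$: (1) for every $\rho$, $\textsc M(x,\rho)$ has the same distribution as $\mathcal M_\rho(x)$; (2) for every finite $S\subset\mathbb{R}_+$ processed in arbitrary order and every $y$, conditioned on $\textsc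 M(x,\max S)=y$, the joint distribution of $(\textsc M(x,\rho))_{\rho\in S}$ is uniquely determined by $y$ and $S$. *)

theory Defs
  imports "HOL-Probability.Probability"
begin

definition convolution_preorder :: "(real \<Rightarrow> real measure) \<Rightarrow> bool" where
  "convolution_preorder D \<longleftrightarrow>
     (\<forall>\<rho>1 \<rho>2. 0 < \<rho>1 \<longrightarrow> \<rho>1 < \<rho>2 \<longrightarrow>
        (\<exists>C. real_distribution C \<and> D \<rho>2 \<star> C = D \<rho>1))"

abbreviation Rd :: "('d::finite \<Rightarrow> real) measure" where
  "Rd \<equiv> PiM UNIV (\<lambda>_. borel)"

definition additive_noise_post :: "'y measure \<Rightarrow> (('d::finite \<Rightarrow> real) \<Rightarrow> 'y)
    \<Rightarrow> ('x \<Rightarrow> 'd \<Rightarrow> real) \<Rightarrow> real measure \<Rightarrow> 'x \<Rightarrow> 'y measure" where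
  "additive_noise_post Y H f P x = distr (PiM UNIV (\<lambda>_. P)) Y (\<lambda>z. H (\<lambda>i. f x i + z i))"

text \<open>An implementation: for input x and a finite sequence qs of distinct positive
  privacy parameters (the order in which they are submitted), Impl x qs is the joint
  law of the outputs, recorded as a function from the submitted parameters to outputs.
  Stateful/online processing: the law of the outputs for a prefix of the query
  sequence does not depend on later queries (prefix consistency).\<close>
definition valid_queries :: "real list \<Rightarrow> bool" where
  "valid_queries qs \<longleftrightarrow> distinct qs \<and> (\<forall>q\<in>set qs. 0 < q)"

definition is_implementation ::
    "'y measure \<Rightarrow> ('x \<Rightarrow> real list \<Rightarrow> (real \<Rightarrow> 'y) measure) \<Rightarrow> bool" where
  "is_implementation Y Impl \<longleftrightarrow>
     (\<forall>x qs. valid_queries qs \<longrightarrow>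
        prob_space (Impl x qs) \<and> sets (Impl x qs) = sets (PiM (set qs) (\<lambda>_. Y))) \<and>
     (\<forall>x qs q. valid_queries (qs @ [q]) \<longrightarrow>
        distr (Impl x (qs @ [q])) (PiM (set qs) (\<lambda>_. Y)) (\<lambda>\<omega>. restrict \<omega> (set qs))
          = Impl x qs)"

definition implements_lossless ::
    "'y measure \<Rightarrow> (real \<Rightarrow> 'x \<Rightarrow> 'y measure) \<Rightarrow> ('x \<Rightarrow> real list \<Rightarrow> (real \<Rightarrow> 'y) measure) \<Rightarrow> bool" where
  "implements_lossless Y M Impl \<longleftrightarrow>
     is_implementation Y Impl \<and>
     \<comment> \<open>(1) each single output has the law of the corresponding mechanism\<close>
     (\<forall>x qs \<rho>. valid_queries qs \<longrightarrow> \<rho> \<in> set qs \<longrightarrow>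
        distr (Impl x qs) Y (\<lambda>\<omega>. \<omega> \<rho>) = M \<rho> x) \<and>
     \<comment> \<open>(2) conditioned on the output at max S, the joint law is given by a kernel
          depending only on S (not on x, nor on the processing order)\<close>
     (\<forall>S. finite S \<longrightarrow> S \<noteq> {} \<longrightarrow> (\<forall>\<rho>\<in>S. 0 < \<rho>) \<longrightarrow>
        (\<exists>K. K \<in> Y \<rightarrow>\<^sub>M prob_algebra (PiM S (\<lambda>_. Y)) \<and>
           (\<forall>x qs. distinct qs \<longrightarrow> set qs = S \<longrightarrow>
              Impl x qs = distr (Impl x qs) Y (\<lambda>\<omega>. \<omega> (Max S)) \<bind> K)))"

definition lossless_multiple_release :: "'y measure \<Rightarrow> (real \<Rightarrow> 'x \<Rightarrow> 'y measure) \<Rightarrow> bool" where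
  "lossless_multiple_release Y M \<longleftrightarrow> (\<exists>Impl. implements_lossless Y M Impl)"

end

(*
  The convolution preorder only provides, for each pair of levels a < b, some kernel C b a with
  D b * C b a = D a.  An implementation needs kernels that are in addition consistent,
  C c a = C c b * C b a.  On a finite set of levels such kernels are obtained by routing each
  new smallest level through its neighbour; a compactness argument then yields a global family:
  the characteristic functions of the finite-stage kernels have a cluster point in the product
  topology, and tightness together with Levy's continuity theorem turns it back into kernels.

  For a finite set S of levels, the noise at level r is the sum of independent increments attached
  to the levels s >= r of S, the top one distributed as D (Max S) and the one at s as C s' s for the
  next level s'.  By consistency, removing a level merges two increments without changing the
  joint law, so these laws are projective, and releasing H (f x + Z r) at every requested level
  is an online implementation with the right marginals.  The increments below Max S are
  independent of the top noise; as H is invertible, the top output determines f x + Z (Max S),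
  and the other outputs are drawn from it by a kernel that does not depend on x.
*)
theory Submission
  imports Defs
begin

section \<open>Convolution factors of real distributions\<close>

lemma real_distribution_convolution:
  assumes "real_distribution M" "real_distribution N"
  shows "real_distribution (M \<star> N)"
proof -
  interpret M: real_distribution M by fact
  interpret N: real_distribution N by fact
  interpret P: pair_prob_space M N ..
  show ?thesis
    unfolding convolution_def real_distribution_def real_distribution_axioms_def
    by (auto intro!: P.prob_space_distr)
qed

lemma real_distribution_convolution_commute:
  assumes "real_distribution M" "real_distribution N"
  shows "(M \<star> N) = (N \<star> M)"
proof -
  interpret M: real_distribution M by fact
  interpret N: real_distribution N by fact
  show ?thesis
    by (rule convolution_commutative)
      (simp_all add: M.finite_measure_axioms N.finite_measure_axioms)
qed

lemma real_distribution_convolution_assoc: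
  assumes "real_distribution L" "real_distribution M" "real_distribution N"
  shows "(L \<star> (M \<star> N)) = ((L \<star> M) \<star> N)"
proof -
  interpret L: real_distribution L by fact
  interpret M: real_distribution M by fact
  interpret N: real_distribution N by fact
  show ?thesis
    by (rule convolution_associative)
      (simp_all add: L.finite_measure_axioms M.finite_measure_axioms N.finite_measure_axioms)
qed

lemma char_convolution:
  assumes "real_distribution M" "real_distribution N"
  shows "char (M \<star> N) t = char M t * char N t"
proof -
  interpret M: real_distribution M by fact
  interpret N: real_distribution N by fact
  interpret P: pair_prob_space M N ..
  have [measurable_cong]: "sets M = sets borel" "sets N = sets borel"
    by simp_all
  have int: "integrable (M \<Otimes>\<^sub>M N) (\<lambda>(x, y). iexp (t * x) * iexp (t * y))"
    by (intro P.integrable_const_bound[where B=1]) (auto simp: norm_mult simp del: of_real_mult)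
  have "char (M \<star> N) t = (CLINT z|M \<Otimes>\<^sub>M N. (\<lambda>(x, y). iexp (t * x) * iexp (t * y)) z)"
    by (simp add: char_def convolution_def integral_distr case_prod_beta' distrib_left exp_add)
  also have "\<dots> = (CLINT x|M. CLINT y|N. iexp (t * x) * iexp (t * y))"
    by (rule P.integral_fst[OF int, symmetric])
  also have "\<dots> = char M t * char N t"
    by (simp add: char_def)
  finally show ?thesis .
qed

lemma real_distribution_eqI_char_of_rat:
  assumes M1: "real_distribution M1" and M2: "real_distribution M2"
    and eq: "\<And>r. char M1 (of_rat r) = char M2 (of_rat r)"
  shows "M1 = M2"
proof (rule Levy_uniqueness[OF M1 M2])
  interpret M1: real_distribution M1 by fact
  interpret M2: real_distribution M2 by fact
  have "closed {t. char M1 t = char M2 t}"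
    by (intro closed_Collect_eq continuous_at_imp_continuous_on ballI M1.isCont_char M2.isCont_char)
  moreover have "\<rat> \<subseteq> {t. char M1 t = char M2 t}"
    using eq by (auto elim: Rats_cases)
  ultimately have "closure \<rat> \<subseteq> {t. char M1 t = char M2 t}"
    by (intro closure_minimal)
  then show "char M1 = char M2"
    by (auto simp: Rats_closure_real)
qed

lemma measure_convolution_outside_ge:
  fixes K :: real
  assumes A: "real_distribution A" and C: "real_distribution C"
  shows "measure C (- {-(2*K)<..2*K}) * measure A {-K<..K} \<le> measure (A \<star> C) (- {-K<..K})"
proof -
  interpret A: real_distribution A by fact
  interpret C: real_distribution C by fact
  interpret AC: real_distribution "A \<star> C"
    by (rule real_distribution_convolution[OF A C])
  let ?E = "- {-K<..K}" and ?E2 = "- {-(2*K)<..2*K}" and ?I = "{-K<..K}"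
  have shift_sets: "{a. a + x \<in> ?E} \<in> sets C" for x
    using measurable_sets[of "\<lambda>a. a + x" borel borel ?E] by (simp add: vimage_def)
  have "emeasure C ?E2 * emeasure A ?I = (\<integral>\<^sup>+x. emeasure C ?E2 * indicator ?I x \<partial>A)"
    by (subst nn_integral_cmult_indicator) auto
  also have "\<dots> \<le> (\<integral>\<^sup>+x. emeasure C {a. a + x \<in> ?E} \<partial>A)"
  proof (intro nn_integral_mono)
    fix x
    show "emeasure C ?E2 * indicator ?I x \<le> emeasure C {a. a + x \<in> ?E}"
    proof (cases "x \<in> ?I")
      case True
      then have "?E2 \<subseteq> {a. a + x \<in> ?E}"
        by auto
      then show ?thesis
        using True by (simp add: emeasure_mono shift_sets)
    qed simp
  qed
  also have "\<dots> = emeasure (A \<star> C) ?E"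
    by (subst convolution_emeasure) auto
  finally show ?thesis
    by (simp add: A.emeasure_eq_measure C.emeasure_eq_measure AC.emeasure_eq_measure
        ennreal_mult''[symmetric])
qed

lemma (in real_distribution) eventually_measure_interval_gt:
  assumes "c < 1"
  shows "eventually (\<lambda>n. c < measure M {-real n<..real n}) sequentially"
proof -
  let ?I = "\<lambda>n::nat. {-real n<..real n}"
  have "incseq ?I"
    by (auto simp: incseq_def)
  moreover have "(\<Union>n. ?I n) = UNIV"
  proof safe
    fix x :: real
    obtain n :: nat where "\<bar>x\<bar> < real n"
      using reals_Archimedean2 by blast
    then have "x \<in> ?I n"
      by auto
    then show "x \<in> (\<Union>n. ?I n)"
      by blast
  qed simp
  ultimately have "(\<lambda>n. measure M (?I n)) \<longlonglongrightarrow> 1"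
    using finite_Lim_measure_incseq[of ?I] prob_space by (auto simp: image_subset_iff)
  then show ?thesis
    using assms by (rule order_tendstoD(1))
qed

lemma tight_convolution_factors:
  assumes A: "real_distribution A" and B: "real_distribution B"
    and \<mu>: "\<And>n. real_distribution (\<mu> n)" and conv: "\<And>n. (A \<star> \<mu> n) = B"
  shows "tight \<mu>"
  unfolding tight_def
proof (intro conjI allI impI \<mu>)
  fix e :: real
  assume e: "0 < e"
  let ?I = "\<lambda>n::nat. {-real n<..real n}"
  have "eventually (\<lambda>n. measure A (?I n) > 1/2 \<and> measure B (?I n) > 1 - e/2) sequentially"
    using e by (intro eventually_conj real_distribution.eventually_measure_interval_gt A B) auto
  then obtain n where nA: "measure A (?I n) > 1/2" and nB: "measure B (?I n) > 1 - e/2"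
    by (auto simp: eventually_sequentially)
  interpret B: real_distribution B
    by fact
  have "0 < n"
    using nA by (rule contrapos_pp) simp
  let ?K = "real n"
  have "1 - e < measure (\<mu> m) {-(2*?K)<..2*?K}" for m
  proof -
    interpret C: real_distribution "\<mu> m"
      by (rule \<mu>)
    have "measure B (- ?I n) < e/2"
      using B.prob_compl[of "?I n"] nB by (simp add: Compl_eq_Diff_UNIV)
    then have "measure (\<mu> m) (- {-(2*?K)<..2*?K}) * measure A (?I n) < e/2"
      using measure_convolution_outside_ge[OF A \<mu>, of m ?K] conv[of m] by simp
    moreover have "measure (\<mu> m) (- {-(2*?K)<..2*?K}) * (1/2)
        \<le> measure (\<mu> m) (- {-(2*?K)<..2*?K}) * measure A (?I n)"
      using nA by (intro mult_left_mono) auto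
    ultimately have "measure (\<mu> m) (- {-(2*?K)<..2*?K}) < e"
      by linarith
    then show ?thesis
      using C.prob_compl[of "{-(2*?K)<..2*?K}"] by (simp add: Compl_eq_Diff_UNIV)
  qed
  moreover have "-(2*?K) < 2*?K"
    using \<open>0 < n\<close> by simp
  ultimately show "\<exists>a b. a < b \<and> (\<forall>m. 1 - e < measure (\<mu> m) {a<..b})"
    by blast
qed

text \<open>Tightness of the factors gives a weakly convergent subsequence, whose limit is identified by
  its characteristic function on the rationals.\<close>
lemma convolution_factor_of_char_limit:
  assumes A: "real_distribution A" and B: "real_distribution B"
    and \<mu>: "\<And>n. real_distribution (\<mu> n)" and conv: "\<And>n. (A \<star> \<mu> n) = B"
    and lim: "\<And>r. (\<lambda>n. char (\<mu> n) (of_rat r)) \<longlonglongrightarrow> \<psi> r"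
  shows "\<exists>\<nu>. real_distribution \<nu> \<and> (A \<star> \<nu>) = B \<and> (\<forall>r. char \<nu> (of_rat r) = \<psi> r)"
proof -
  have "tight \<mu>"
    by (rule tight_convolution_factors[OF A B \<mu> conv])
  from tight_imp_convergent_subsubsequence[OF this strict_mono_id]
  obtain s \<nu> where s: "strict_mono s" and \<nu>: "real_distribution \<nu>" and wc: "weak_conv_m (\<mu> \<circ> s) \<nu>"
    by auto
  have char_\<nu>: "char \<nu> (of_rat r) = \<psi> r" for r
  proof (rule LIMSEQ_unique)
    show "(\<lambda>n. char ((\<mu> \<circ> s) n) (of_rat r)) \<longlonglongrightarrow> char \<nu> (of_rat r)"
      by (rule levy_continuity1[OF _ \<nu> wc]) (simp add: \<mu>)
    show "(\<lambda>n. char ((\<mu> \<circ> s) n) (of_rat r)) \<longlonglongrightarrow> \<psi> r"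
      using LIMSEQ_subseq_LIMSEQ[OF lim s] by (simp add: comp_def)
  qed
  have "(A \<star> \<nu>) = B"
  proof (rule real_distribution_eqI_char_of_rat[OF real_distribution_convolution[OF A \<nu>] B])
    fix r
    have "(\<lambda>n. char A (of_rat r) * char (\<mu> n) (of_rat r)) \<longlonglongrightarrow> char A (of_rat r) * \<psi> r"
      by (intro tendsto_mult_left lim)
    moreover have "char A (of_rat r) * char (\<mu> n) (of_rat r) = char B (of_rat r)" for n
      using char_convolution[OF A \<mu>] conv by metis
    ultimately have "char A (of_rat r) * \<psi> r = char B (of_rat r)"
      by (simp add: LIMSEQ_const_iff)
    then show "char (A \<star> \<nu>) (of_rat r) = char B (of_rat r)"
      by (simp add: char_convolution[OF A \<nu>] char_\<nu>)
  qed
  with \<nu> char_\<nu> show ?thesis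
    by blast
qed

section \<open>Cluster points in product topologies\<close>

lemma compact_cluster_point_finite_subsets:
  fixes \<Phi> :: "'a set \<Rightarrow> 'b::topological_space"
  assumes "compact X" and "\<And>L. finite L \<Longrightarrow> \<Phi> L \<in> X"
  shows "\<exists>\<psi>\<in>X. \<forall>F. finite F \<longrightarrow> \<psi> \<in> closure {\<Phi> L | L. finite L \<and> F \<subseteq> L}"
proof -
  have "X \<inter> (\<Inter>F\<in>{F. finite F}. closure {\<Phi> L | L. finite L \<and> F \<subseteq> L}) \<noteq> {}"
  proof (rule compact_imp_fip_image[OF \<open>compact X\<close>])
    fix \<F> :: "'a set set"
    assume \<F>: "finite \<F>" "\<F> \<subseteq> {F. finite F}"
    then have fin: "finite (\<Union>\<F>)"
      by auto
    have "\<Phi> (\<Union>\<F>) \<in> closure {\<Phi> L | L. finite L \<and> F \<subseteq> L}" if "F \<in> \<F>" for F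
      using that fin by (intro subsetD[OF closure_subset]) auto
    then have "\<Phi> (\<Union>\<F>) \<in> X \<inter> (\<Inter>F\<in>\<F>. closure {\<Phi> L | L. finite L \<and> F \<subseteq> L})"
      using assms(2)[OF fin] by blast
    then show "X \<inter> (\<Inter>F\<in>\<F>. closure {\<Phi> L | L. finite L \<and> F \<subseteq> L}) \<noteq> {}"
      by blast
  qed simp
  then show ?thesis
    by blast
qed

lemma closure_imp_seq_tendsto_at_coordinates:
  fixes \<psi> :: "'a \<Rightarrow> 'b::metric_space" and x :: "nat \<Rightarrow> 'a"
  assumes "\<psi> \<in> closure S"
  shows "\<exists>\<phi>. (\<forall>n. \<phi> n \<in> S) \<and> (\<forall>k. (\<lambda>n. \<phi> n (x k)) \<longlonglongrightarrow> \<psi> (x k))"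
proof -
  have "\<exists>\<phi>\<in>S. \<forall>k\<in>{..n}. \<phi> (x k) \<in> ball (\<psi> (x k)) (1 / Suc n)" for n
  proof -
    let ?O = "{\<phi>. \<forall>k\<in>{..n}. \<phi> (x k) \<in> ball (\<psi> (x k)) (1 / Suc n)}"
    have "open ?O"
      by (rule product_topology_basis') auto
    moreover have "\<psi> \<in> ?O"
      by auto
    ultimately have "S \<inter> ?O \<noteq> {}"
      using assms unfolding closure_iff_nhds_not_empty by blast
    then show ?thesis
      by blast
  qed
  then obtain \<phi> where \<phi>S: "\<And>n. \<phi> n \<in> S"
    and close: "\<And>n k. k \<le> n \<Longrightarrow> dist (\<psi> (x k)) (\<phi> n (x k)) < 1 / Suc n"
    by (metis atMost_iff mem_ball)
  have "(\<lambda>n. \<phi> n (x k)) \<longlonglongrightarrow> \<psi> (x k)" for k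
  proof (rule metric_LIMSEQ_I)
    fix r :: real
    assume "0 < r"
    then obtain N :: nat where N: "1 / Suc N < r"
      using reals_Archimedean by (auto simp: inverse_eq_divide)
    have "dist (\<phi> n (x k)) (\<psi> (x k)) < r" if "max k N \<le> n" for n
    proof -
      have "1 / Suc n \<le> 1 / Suc N"
        using that by (simp add: frac_le)
      then show ?thesis
        using close[of k n] that N by (simp add: dist_commute)
    qed
    then show "\<exists>no. \<forall>n\<ge>no. dist (\<phi> n (x k)) (\<psi> (x k)) < r"
      by blast
  qed
  with \<phi>S show ?thesis
    by blast
qed

section \<open>A consistent family of convolution kernels\<close>

definition convolution_kernels :: "(real \<Rightarrow> real measure) \<Rightarrow> (real \<Rightarrow> real \<Rightarrow> real measure) \<Rightarrow> bool"
  where "convolution_kernels D C \<longleftrightarrow>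
    (\<forall>a b. 0 < a \<longrightarrow> a < b \<longrightarrow> real_distribution (C b a) \<and> (D b \<star> C b a) = D a)"

definition kernels_consistent_on :: "real set \<Rightarrow> (real \<Rightarrow> real \<Rightarrow> real measure) \<Rightarrow> bool"
  where "kernels_consistent_on L C \<longleftrightarrow>
    (\<forall>a\<in>L. \<forall>b\<in>L. \<forall>c\<in>L. 0 < a \<longrightarrow> a < b \<longrightarrow> b < c \<longrightarrow> C c a = (C c b \<star> C b a))"

lemma convolution_kernelsD:
  "convolution_kernels D C \<Longrightarrow> 0 < a \<Longrightarrow> a < b \<Longrightarrow> real_distribution (C b a)"
  "convolution_kernels D C \<Longrightarrow> 0 < a \<Longrightarrow> a < b \<Longrightarrow> (D b \<star> C b a) = D a"
  by (simp_all add: convolution_kernels_def)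

text \<open>Kernels starting at a new smallest level \<open>m\<close> are routed through the next level \<open>m'\<close>, using a
  kernel \<open>E\<close> from \<open>m'\<close> to \<open>m\<close>.\<close>
definition route_kernels ::
    "real \<Rightarrow> real \<Rightarrow> real measure \<Rightarrow> (real \<Rightarrow> real \<Rightarrow> real measure) \<Rightarrow> real \<Rightarrow> real \<Rightarrow> real measure"
  where "route_kernels m m' E C b a =
    (if a = m \<and> b = m' then E else if a = m \<and> m' < b then (C b m' \<star> E) else C b a)"

lemma convolution_kernels_route:
  assumes D: "\<And>\<rho>. 0 < \<rho> \<Longrightarrow> real_distribution (D \<rho>)" and C: "convolution_kernels D C"
    and m: "0 < m" "m < m'" and E: "real_distribution E" "(D m' \<star> E) = D m"
  shows "convolution_kernels D (route_kernels m m' E C)"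
  unfolding convolution_kernels_def
proof (intro allI impI)
  fix a b :: real
  assume ab: "0 < a" "a < b"
  show "real_distribution (route_kernels m m' E C b a) \<and> (D b \<star> route_kernels m m' E C b a) = D a"
  proof (cases "a = m \<and> m' < b")
    case True
    have C_bm': "real_distribution (C b m')" "(D b \<star> C b m') = D m'"
      using convolution_kernelsD[OF C, of m' b] m True by auto
    have "(D b \<star> (C b m' \<star> E)) = ((D b \<star> C b m') \<star> E)"
      using D[of b] C_bm'(1) E(1) ab by (intro real_distribution_convolution_assoc) auto
    then have "(D b \<star> (C b m' \<star> E)) = D m"
      using C_bm'(2) E(2) by simp
    moreover have "real_distribution (C b m' \<star> E)"
      using C_bm'(1) E(1) by (rule real_distribution_convolution)
    ultimately show ?thesis
      using True m by (simp add: route_kernels_def)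
  next
    case False
    then show ?thesis
      using convolution_kernelsD[OF C ab] E by (auto simp: route_kernels_def)
  qed
qed

lemma kernels_consistent_on_route:
  assumes C: "convolution_kernels D C" and cons: "kernels_consistent_on L C"
    and L: "finite L" "m' = Min L" "L \<noteq> {}" and m: "0 < m" "m < m'" and E: "real_distribution E"
  shows "kernels_consistent_on (insert m L) (route_kernels m m' E C)"
  unfolding kernels_consistent_on_def
proof (intro ballI impI)
  fix a b c
  assume abc: "a \<in> insert m L" "b \<in> insert m L" "c \<in> insert m L" "0 < a" "a < b" "b < c"
  have above: "m' \<le> x" if "x \<in> L" for x
    using L that by simp
  have "b \<in> L" "c \<in> L"
    using abc above m by force+
  show "route_kernels m m' E C c a = (route_kernels m m' E C c b \<star> route_kernels m m' E C b a)"
  proof (cases "a = m")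
    case False
    then have "a \<in> L" "b \<noteq> m" "c \<noteq> m"
      using abc above m by force+
    with cons abc \<open>b \<in> L\<close> \<open>c \<in> L\<close> False show ?thesis
      by (simp add: kernels_consistent_on_def route_kernels_def)
  next
    case True
    have "m' \<le> b" "m' < c"
      using above \<open>b \<in> L\<close> \<open>c \<in> L\<close> abc by force+
    show ?thesis
    proof (cases "b = m'")
      case True
      with \<open>a = m\<close> \<open>m' < c\<close> m show ?thesis
        by (simp add: route_kernels_def)
    next
      case False
      with \<open>m' \<le> b\<close> have "m' < b"
        by simp
      have "m' \<in> L"
        using L by simp
      have "(C c b \<star> (C b m' \<star> E)) = ((C c b \<star> C b m') \<star> E)"
        using convolution_kernelsD(1)[OF C] E \<open>m' < b\<close> abc m
        by (intro real_distribution_convolution_assoc) auto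
      also have "(C c b \<star> C b m') = C c m'"
        using cons \<open>m' \<in> L\<close> \<open>b \<in> L\<close> \<open>c \<in> L\<close> \<open>m' < b\<close> abc m
        by (simp add: kernels_consistent_on_def)
      finally show ?thesis
        using \<open>a = m\<close> \<open>m' < b\<close> abc m by (simp add: route_kernels_def)
    qed
  qed
qed

lemma convolution_kernels_consistent_on_finite:
  assumes D: "\<And>\<rho>. 0 < \<rho> \<Longrightarrow> real_distribution (D \<rho>)" and pre: "convolution_preorder D"
    and "finite L"
  shows "\<exists>C. convolution_kernels D C \<and> kernels_consistent_on L C"
  using \<open>finite L\<close>
proof (induction rule: finite_linorder_min_induct)
  case empty
  have ex: "\<exists>C. real_distribution C \<and> (D b \<star> C) = D a" if "0 < a" "a < b" for a b
    using pre that unfolding convolution_preorder_def by blast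
  define C where "C b a = (SOME C. real_distribution C \<and> (D b \<star> C) = D a)" for b a
  have "real_distribution (C b a) \<and> (D b \<star> C b a) = D a" if "0 < a" "a < b" for a b
    unfolding C_def using someI_ex[OF ex[OF that]] .
  then have "convolution_kernels D C"
    by (simp add: convolution_kernels_def)
  then show ?case
    by (auto simp: kernels_consistent_on_def)
next
  case (insert m L)
  obtain C where C: "convolution_kernels D C" and cons: "kernels_consistent_on L C"
    using insert.IH by blast
  show ?case
  proof (cases "L = {} \<or> m \<le> 0")
    case True
    have "kernels_consistent_on (insert m L) C"
      unfolding kernels_consistent_on_def
    proof (intro ballI impI)
      fix a b c
      assume abc: "a \<in> insert m L" "b \<in> insert m L" "c \<in> insert m L" "0 < a" "a < b" "b < c"
      then have "a \<in> L" "b \<in> L" "c \<in> L"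
        using True insert.hyps(2) by force+
      then show "C c a = (C c b \<star> C b a)"
        using cons abc unfolding kernels_consistent_on_def by blast
    qed
    with C show ?thesis
      by blast
  next
    case False
    then have "L \<noteq> {}" "0 < m"
      by auto
    define m' where "m' = Min L"
    have "m < m'"
      using insert.hyps \<open>L \<noteq> {}\<close> by (simp add: m'_def)
    obtain E where "real_distribution E" "(D m' \<star> E) = D m"
      using pre \<open>0 < m\<close> \<open>m < m'\<close> unfolding convolution_preorder_def by blast
    then show ?thesis
      using convolution_kernels_route[OF D C \<open>0 < m\<close> \<open>m < m'\<close>]
        kernels_consistent_on_route[OF C cons insert.hyps(1) m'_def \<open>L \<noteq> {}\<close> \<open>0 < m\<close> \<open>m < m'\<close>]
      by blast
  qed
qed

text \<open>Compactness: the characteristic functions of kernels that are consistent on ever larger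
  finite sets have a cluster point in the product topology.\<close>
lemma char_kernels_cluster_point:
  assumes D: "\<And>\<rho>. 0 < \<rho> \<Longrightarrow> real_distribution (D \<rho>)" and pre: "convolution_preorder D"
  obtains \<psi> :: "real \<times> real \<times> rat \<Rightarrow> complex"
  where "\<And>a b c r. 0 < a \<Longrightarrow> a < b \<Longrightarrow> b < c \<Longrightarrow> \<psi> (c, a, r) = \<psi> (c, b, r) * \<psi> (b, a, r)"
    and "\<And>a b. 0 < a \<Longrightarrow> a < b \<Longrightarrow> \<exists>\<mu>. (\<forall>n. real_distribution (\<mu> n) \<and> (D b \<star> \<mu> n) = D a)
      \<and> (\<forall>r. (\<lambda>n. char (\<mu> n) (of_rat r)) \<longlonglongrightarrow> \<psi> (b, a, r))"
proof -
  define CL where "CL L = (SOME C. convolution_kernels D C \<and> kernels_consistent_on L C)" for L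
  have CL: "convolution_kernels D (CL L)" "kernels_consistent_on L (CL L)" if "finite L" for L
    using someI_ex[OF convolution_kernels_consistent_on_finite[OF D pre that]]
    by (simp_all add: CL_def)
  define \<Phi> where "\<Phi> L = (\<lambda>(b, a, r). if 0 < a \<and> a < b then char (CL L b a) (of_rat r) else 0)" for L
  let ?X = "Pi\<^sub>E UNIV (\<lambda>_. cball (0::complex) 1) :: (real \<times> real \<times> rat \<Rightarrow> complex) set"
  have compact: "compact ?X"
    using compactin_PiE[of "\<lambda>_. euclidean" UNIV "\<lambda>_. cball (0::complex) 1"]
    by (simp add: euclidean_product_topology compactin_euclidean_iff)
  have bounded: "\<Phi> L \<in> ?X" if "finite L" for L
  proof -
    have "\<Phi> L (b, a, r) \<in> cball 0 1" for b a r
      using real_distribution.cmod_char_le_1[OF convolution_kernelsD(1)[OF CL(1)[OF that]]]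
      by (simp add: \<Phi>_def)
    then show ?thesis
      by (simp add: PiE_UNIV_domain Pi_iff split_paired_all)
  qed
  have "\<exists>\<psi>\<in>?X. \<forall>F. finite F \<longrightarrow> \<psi> \<in> closure {\<Phi> L | L. finite L \<and> F \<subseteq> L}"
    by (rule compact_cluster_point_finite_subsets[OF compact bounded])
  then obtain \<psi> where \<psi>: "\<And>F. finite F \<Longrightarrow> \<psi> \<in> closure {\<Phi> L | L. finite L \<and> F \<subseteq> L}"
    by blast
  show ?thesis
  proof (rule that)
    fix a b c :: real and r :: rat
    assume abc: "0 < a" "a < b" "b < c"
    have coordinate: "continuous_on UNIV (\<lambda>\<phi>::real \<times> real \<times> rat \<Rightarrow> complex. \<phi> k)" for k
      by simp
    have "\<Phi> L (c, a, r) = \<Phi> L (c, b, r) * \<Phi> L (b, a, r)" if "finite L" "{a, b, c} \<subseteq> L" for L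
    proof -
      have "CL L c a = (CL L c b \<star> CL L b a)"
        using CL(2)[OF that(1)] that(2) abc by (simp add: kernels_consistent_on_def)
      then show ?thesis
        using convolution_kernelsD(1)[OF CL(1)[OF that(1)]] abc
        by (simp add: \<Phi>_def char_convolution)
    qed
    then have "closure {\<Phi> L | L. finite L \<and> {a, b, c} \<subseteq> L}
        \<subseteq> {\<phi>. \<phi> (c, a, r) = \<phi> (c, b, r) * \<phi> (b, a, r)}"
      by (intro closure_minimal closed_Collect_eq[OF coordinate continuous_on_mult[OF coordinate coordinate]])
        auto
    then show "\<psi> (c, a, r) = \<psi> (c, b, r) * \<psi> (b, a, r)"
      using \<psi>[of "{a, b, c}"] by auto
  next
    fix a b :: real
    assume ab: "0 < a" "a < b"
    obtain \<phi> where \<phi>: "\<And>n. \<phi> n \<in> {\<Phi> L | L. finite L \<and> {} \<subseteq> L}"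
      and lim: "\<And>k. (\<lambda>n. \<phi> n (b, a, from_nat k)) \<longlonglongrightarrow> \<psi> (b, a, from_nat k)"
      using closure_imp_seq_tendsto_at_coordinates[OF \<psi>[of "{}"], of "\<lambda>k. (b, a, from_nat k)"]
      by auto
    have "\<forall>n. \<exists>L. finite L \<and> \<phi> n = \<Phi> L"
      using \<phi> by blast
    then obtain Ls where Ls: "\<And>n. finite (Ls n)" "\<And>n. \<phi> n = \<Phi> (Ls n)"
      by (metis choice)
    have "(\<lambda>n. char (CL (Ls n) b a) (of_rat r)) \<longlonglongrightarrow> \<psi> (b, a, r)" for r
      using lim[of "to_nat r"] ab by (simp add: Ls \<Phi>_def)
    moreover have "real_distribution (CL (Ls n) b a) \<and> (D b \<star> CL (Ls n) b a) = D a" for n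
      using convolution_kernelsD[OF CL(1)[OF Ls(1)] ab] by simp
    ultimately show "\<exists>\<mu>. (\<forall>n. real_distribution (\<mu> n) \<and> (D b \<star> \<mu> n) = D a)
        \<and> (\<forall>r. (\<lambda>n. char (\<mu> n) (of_rat r)) \<longlonglongrightarrow> \<psi> (b, a, r))"
      by (intro exI[of _ "\<lambda>n. CL (Ls n) b a"]) auto
  qed
qed

lemma consistent_convolution_kernels_exist:
  assumes D: "\<And>\<rho>. 0 < \<rho> \<Longrightarrow> real_distribution (D \<rho>)" and pre: "convolution_preorder D"
  shows "\<exists>C. convolution_kernels D C \<and> kernels_consistent_on UNIV C"
proof -
  obtain \<psi> where \<psi>_mult: "\<And>a b c r. 0 < a \<Longrightarrow> a < b \<Longrightarrow> b < c \<Longrightarrow> \<psi> (c, a, r) = \<psi> (c, b, r) * \<psi> (b, a, r)"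
    and approx: "\<And>a b. 0 < a \<Longrightarrow> a < b \<Longrightarrow> \<exists>\<mu>. (\<forall>n. real_distribution (\<mu> n) \<and> (D b \<star> \<mu> n) = D a)
      \<and> (\<forall>r. (\<lambda>n. char (\<mu> n) (of_rat r)) \<longlonglongrightarrow> \<psi> (b, a, r))"
    using char_kernels_cluster_point[OF D pre] by blast
  have factor: "\<exists>\<nu>. real_distribution \<nu> \<and> (D b \<star> \<nu>) = D a \<and> (\<forall>r. char \<nu> (of_rat r) = \<psi> (b, a, r))"
    if ab: "0 < a" "a < b" for a b
  proof -
    obtain \<mu> where "\<And>n. real_distribution (\<mu> n)" "\<And>n. (D b \<star> \<mu> n) = D a"
      "\<And>r. (\<lambda>n. char (\<mu> n) (of_rat r)) \<longlonglongrightarrow> \<psi> (b, a, r)"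
      using approx[OF ab] by blast
    with ab show ?thesis
      using D by (intro convolution_factor_of_char_limit) auto
  qed
  define C where "C b a = (SOME \<nu>. real_distribution \<nu> \<and> (D b \<star> \<nu>) = D a
    \<and> (\<forall>r. char \<nu> (of_rat r) = \<psi> (b, a, r)))" for b a
  have C: "real_distribution (C b a)" "(D b \<star> C b a) = D a" "\<And>r. char (C b a) (of_rat r) = \<psi> (b, a, r)"
    if "0 < a" "a < b" for a b
    using someI_ex[OF factor[OF that]] by (simp_all add: C_def)
  have "C c a = (C c b \<star> C b a)" if abc: "0 < a" "a < b" "b < c" for a b c
  proof (rule real_distribution_eqI_char_of_rat)
    show "real_distribution (C c a)" "real_distribution (C c b \<star> C b a)"
      using abc C(1) real_distribution_convolution by auto
    show "char (C c a) (of_rat r) = char (C c b \<star> C b a) (of_rat r)" for r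
      using abc C(1) by (simp add: char_convolution C(3) \<psi>_mult)
  qed
  then show ?thesis
    using C(1,2)
    by (intro exI[of _ C]) (simp add: convolution_kernels_def kernels_consistent_on_def)
qed

section \<open>Neighbouring levels in a finite set\<close>

definition next_in :: "'a::linorder set \<Rightarrow> 'a \<Rightarrow> 'a"
  where "next_in S s = Min {r \<in> S. s < r}"

definition prev_in :: "'a::linorder set \<Rightarrow> 'a \<Rightarrow> 'a"
  where "prev_in S q = Max {r \<in> S. r < q}"

lemma next_in_le: "finite S \<Longrightarrow> r \<in> S \<Longrightarrow> s < r \<Longrightarrow> next_in S s \<le> r"
  by (auto simp: next_in_def intro: Min_le)

lemma next_in_mem:
  assumes "finite S" "s \<in> S" "s \<noteq> Max S"
  shows "next_in S s \<in> S" "s < next_in S s"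
proof -
  have "s < Max S"
    using Max_ge[OF assms(1,2)] assms(3) by (auto simp: order_le_less)
  moreover have "Max S \<in> S"
    using assms(1,2) by (intro Max_in) auto
  ultimately have "{r \<in> S. s < r} \<noteq> {}"
    by blast
  then show "next_in S s \<in> S" "s < next_in S s"
    using Min_in[of "{r \<in> S. s < r}"] assms(1) by (auto simp: next_in_def)
qed

lemma prev_in_mem:
  assumes "finite S" "q \<in> S" "q \<noteq> Min S"
  shows "prev_in S q \<in> S" "prev_in S q < q" "\<And>s. s \<in> S \<Longrightarrow> s < q \<Longrightarrow> s \<le> prev_in S q"
proof -
  have "Min S < q"
    using Min_le[OF assms(1,2)] assms(3) by (auto simp: order_le_less)
  moreover have "Min S \<in> S"
    using assms(1,2) by (intro Min_in) auto
  ultimately have "{r \<in> S. r < q} \<noteq> {}"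
    by blast
  then show "prev_in S q \<in> S" "prev_in S q < q"
    using Max_in[of "{r \<in> S. r < q}"] assms(1) by (auto simp: prev_in_def)
  show "\<And>s. s \<in> S \<Longrightarrow> s < q \<Longrightarrow> s \<le> prev_in S q"
    using assms(1) by (auto simp: prev_in_def intro: Max_ge)
qed

lemma next_in_prev_in:
  assumes "finite S" "q \<in> S" "q \<noteq> Min S"
  shows "next_in S (prev_in S q) = q"
  unfolding next_in_def
proof (rule Min_eqI)
  show "q \<le> r" if "r \<in> {r \<in> S. prev_in S q < r}" for r
    using that prev_in_mem[OF assms] by force
qed (use assms prev_in_mem[OF assms] in auto)

lemma next_in_eq_imp_prev_in:
  assumes "finite S" "s \<in> S" "s \<noteq> Max S" "next_in S s = q"
  shows "q \<noteq> Min S" "s = prev_in S q"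
proof -
  have q: "q \<in> S" "s < q"
    using next_in_mem[OF assms(1-3)] assms(4) by auto
  then show "q \<noteq> Min S"
    using Min_le[OF assms(1,2)] by auto
  show "s = prev_in S q"
    unfolding prev_in_def
  proof (rule Max_eqI[symmetric])
    show "r \<le> s" if "r \<in> {r \<in> S. r < q}" for r
      using that next_in_le[OF assms(1), of r s] assms(4) by force
  qed (use assms q in auto)
qed

lemma next_in_remove:
  assumes "finite S" "s \<in> S" "s \<noteq> q" "s \<noteq> Max S" "next_in S s \<noteq> q"
  shows "s \<noteq> Max (S - {q})" "next_in (S - {q}) s = next_in S s"
proof -
  have n: "next_in S s \<in> S - {q}" "s < next_in S s"
    using next_in_mem[OF assms(1,2,4)] assms(5) by auto
  show "next_in (S - {q}) s = next_in S s"
    unfolding next_in_def[of "S - {q}"]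
    by (rule Min_eqI) (use n assms(1) next_in_le[OF assms(1)] in auto)
  have "next_in S s \<le> Max (S - {q})"
    using Max_ge[of "S - {q}"] n(1) assms(1) by auto
  then show "s \<noteq> Max (S - {q})"
    using n(2) by auto
qed

lemma next_in_remove_next:
  assumes "finite S" "s \<in> S" "s \<noteq> Max S" "next_in S s = q" "q \<noteq> Max S"
  shows "s \<noteq> Max (S - {q})" "next_in (S - {q}) s = next_in S q"
proof -
  have q: "q \<in> S" "s < q"
    using next_in_mem[OF assms(1-3)] assms(4) by auto
  have n: "next_in S q \<in> S - {q}" "q < next_in S q"
    using next_in_mem[OF assms(1) q(1) assms(5)] by auto
  show "next_in (S - {q}) s = next_in S q"
    unfolding next_in_def[of "S - {q}"]
  proof (rule Min_eqI)
    show "next_in S q \<le> r" if "r \<in> {r \<in> S - {q}. s < r}" for r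
      using that next_in_le[OF assms(1), of r s] next_in_le[OF assms(1), of r q] assms(4)
      by force
  qed (use n q assms(1) in auto)
  have "next_in S q \<le> Max (S - {q})"
    using Max_ge[of "S - {q}"] n(1) assms(1) by auto
  then show "s \<noteq> Max (S - {q})"
    using n(2) q(2) by auto
qed

lemma Max_remove_prev:
  assumes "finite S" "s \<in> S" "s \<noteq> Max S" "next_in S s = Max S"
  shows "Max (S - {Max S}) = s"
proof (rule Max_eqI)
  show "r \<le> s" if "r \<in> S - {Max S}" for r
  proof (rule ccontr)
    assume "\<not> r \<le> s"
    then have "Max S \<le> r"
      using that next_in_le[OF assms(1), of r s] assms(4) by auto
    then show False
      using that Max_ge[OF assms(1), of r] by auto
  qed
qed (use assms in auto)

lemma le_iff_le_prev_in:
  assumes S: "finite S" "q \<in> S" and \<rho>: "\<rho> \<in> S" "\<rho> \<noteq> q"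
  shows "\<rho> \<le> q \<longleftrightarrow> q \<noteq> Min S \<and> \<rho> \<le> prev_in S q"
proof
  assume "\<rho> \<le> q"
  with \<rho> have "\<rho> < q"
    by simp
  moreover from this have "q \<noteq> Min S"
    using Min_le[OF S(1) \<rho>(1)] by auto
  ultimately show "q \<noteq> Min S \<and> \<rho> \<le> prev_in S q"
    using prev_in_mem(3)[OF S] \<rho>(1) by auto
next
  assume "q \<noteq> Min S \<and> \<rho> \<le> prev_in S q"
  then show "\<rho> \<le> q"
    using prev_in_mem(2)[OF S] by force
qed

section \<open>Products of independent coordinates\<close>

lemma indep_vars_PiM_coordinates:
  fixes G :: "'k \<Rightarrow> real measure"
  assumes I: "finite I" "I \<noteq> {}" and G: "\<And>k. real_distribution (G k)"
  shows "prob_space.indep_vars (PiM I G) (\<lambda>_. borel) (\<lambda>k \<omega>. \<omega> k) I"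
proof -
  interpret P: prob_space "PiM I G"
    using G by (intro prob_space_PiM) (simp add: real_distribution_def)
  have sets_G: "sets (G k) = sets borel" for k
    using G[of k] by (simp add: real_distribution_def real_distribution_axioms_def)
  have sets_P: "sets (PiM I G) = sets (PiM I (\<lambda>_. borel))"
    by (rule sets_PiM_cong) (auto simp: sets_G)
  have rv: "(\<lambda>\<omega>. \<omega> k) \<in> PiM I G \<rightarrow>\<^sub>M borel" if "k \<in> I" for k
    using measurable_component_singleton[OF that, of G]
      measurable_cong_sets[OF refl sets_G[of k], of "PiM I G"] by simp
  have component: "distr (PiM I G) borel (\<lambda>\<omega>. \<omega> k) = G k" if "k \<in> I" for k
  proof -
    have "distr (PiM I G) borel (\<lambda>\<omega>. \<omega> k) = distr (PiM I G) (G k) (\<lambda>\<omega>. \<omega> k)"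
      by (rule distr_cong) (auto simp: sets_G)
    also have "\<dots> = G k"
      using G that by (intro distr_PiM_component) (auto simp: real_distribution_def)
    finally show ?thesis .
  qed
  have "distr (PiM I G) (PiM I (\<lambda>_. borel)) (\<lambda>x. \<lambda>k\<in>I. x k) = distr (PiM I G) (PiM I G) (\<lambda>x. x)"
    by (rule distr_cong) (auto simp: sets_P space_PiM PiE_def extensional_restrict)
  also have "\<dots> = PiM I (\<lambda>k. distr (PiM I G) borel (\<lambda>\<omega>. \<omega> k))"
    by (simp add: component cong: PiM_cong)
  finally show ?thesis
    by (subst P.indep_vars_iff_distr_eq_PiM'[OF I(2) rv]) auto
qed

lemma distr_PiM_block_sums:
  fixes G :: "'k \<Rightarrow> real measure" and block :: "'j \<Rightarrow> 'k set"
  assumes I: "finite I" "I \<noteq> {}" and G: "\<And>k. real_distribution (G k)"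
    and J: "J \<noteq> {}" and block: "\<And>j. j \<in> J \<Longrightarrow> block j \<subseteq> I" "disjoint_family_on block J"
  shows "distr (PiM I G) (PiM J (\<lambda>_. borel)) (\<lambda>\<omega>. \<lambda>j\<in>J. \<Sum>k\<in>block j. \<omega> k) =
    PiM J (\<lambda>j. distr (PiM I G) borel (\<lambda>\<omega>. \<Sum>k\<in>block j. \<omega> k))"
proof -
  interpret P: prob_space "PiM I G"
    using G by (intro prob_space_PiM) (simp add: real_distribution_def)
  have sets_G: "sets (G k) = sets borel" for k
    using G[of k] by (simp add: real_distribution_def real_distribution_axioms_def)
  have "P.indep_vars (\<lambda>j. PiM (block j) (\<lambda>_. borel)) (\<lambda>j \<omega>. restrict \<omega> (block j)) J"
    using P.indep_vars_restrict[OF indep_vars_PiM_coordinates[OF I G] block] by simp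
  then have "P.indep_vars (\<lambda>_. borel) (\<lambda>j \<omega>. (\<lambda>x. \<Sum>k\<in>block j. x k) (restrict \<omega> (block j))) J"
    by (rule P.indep_vars_compose2) auto
  then have indep: "P.indep_vars (\<lambda>_. borel) (\<lambda>j \<omega>. \<Sum>k\<in>block j. \<omega> k) J"
    by simp
  have rv: "(\<lambda>\<omega>. \<Sum>k\<in>block j. \<omega> k) \<in> PiM I G \<rightarrow>\<^sub>M borel" if "j \<in> J" for j
  proof -
    have "(\<lambda>\<omega>. \<omega> k) \<in> PiM I G \<rightarrow>\<^sub>M borel" if "k \<in> block j" for k
      using measurable_component_singleton[of k I G] block(1)[OF \<open>j \<in> J\<close>] that
        measurable_cong_sets[OF refl sets_G[of k], of "PiM I G"] by auto
    then show ?thesis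
      by (intro borel_measurable_sum) auto
  qed
  show ?thesis
    using indep by (subst (asm) P.indep_vars_iff_distr_eq_PiM'[OF J rv]) auto
qed

lemma distr_PiM_add_coordinates:
  fixes G :: "'k \<Rightarrow> real measure"
  assumes I: "finite I" and G: "\<And>k. real_distribution (G k)"
    and k: "k1 \<in> I" "k2 \<in> I" "k1 \<noteq> k2"
  shows "distr (PiM I G) borel (\<lambda>\<omega>. \<omega> k1 + \<omega> k2) = (G k1 \<star> G k2)"
proof -
  interpret P: prob_space "PiM I G"
    using G by (intro prob_space_PiM) (simp add: real_distribution_def)
  have sets_G: "sets (G k) = sets borel" for k
    using G[of k] by (simp add: real_distribution_def real_distribution_axioms_def)
  have "I \<noteq> {}"
    using k by auto
  have "P.indep_var (PiM {k1} (\<lambda>_. borel)) (\<lambda>\<omega>. restrict \<omega> {k1})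
    (PiM {k2} (\<lambda>_. borel)) (\<lambda>\<omega>. restrict \<omega> {k2})"
    by (rule P.indep_var_restrict[OF indep_vars_PiM_coordinates[OF I \<open>I \<noteq> {}\<close> G]])
      (use k in auto)
  then have "P.indep_var borel ((\<lambda>x. x k1) \<circ> (\<lambda>\<omega>. restrict \<omega> {k1}))
    borel ((\<lambda>x. x k2) \<circ> (\<lambda>\<omega>. restrict \<omega> {k2}))"
    by (rule P.indep_var_compose) auto
  then have indep: "P.indep_var borel (\<lambda>\<omega>. \<omega> k1) borel (\<lambda>\<omega>. \<omega> k2)"
    by (simp add: comp_def)
  have component: "distr (PiM I G) borel (\<lambda>\<omega>. \<omega> k) = G k" if "k \<in> I" for k
  proof -
    have "distr (PiM I G) borel (\<lambda>\<omega>. \<omega> k) = distr (PiM I G) (G k) (\<lambda>\<omega>. \<omega> k)"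
      by (rule distr_cong) (auto simp: sets_G)
    also have "\<dots> = G k"
      using G that by (intro distr_PiM_component) (auto simp: real_distribution_def)
    finally show ?thesis .
  qed
  have "distr (PiM I G) borel (\<lambda>\<omega>. \<omega> k1 + \<omega> k2)
      = (distr (PiM I G) borel (\<lambda>\<omega>. \<omega> k1) \<star> distr (PiM I G) borel (\<lambda>\<omega>. \<omega> k2))"
    using indep by (intro P.sum_indep_random_variable) (auto dest: P.indep_var_rv1 P.indep_var_rv2)
  then show ?thesis
    using k by (simp add: component)
qed

lemma distr_pair_measure_eq_bind:
  assumes A: "prob_space A" and B: "prob_space B" and h: "h \<in> A \<rightarrow>\<^sub>M Y"
    and F: "(\<lambda>p. F (fst p) (snd p)) \<in> (Y \<Otimes>\<^sub>M B) \<rightarrow>\<^sub>M N"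
  shows "distr (A \<Otimes>\<^sub>M B) N (\<lambda>p. F (h (fst p)) (snd p)) = distr A Y h \<bind> (\<lambda>y. distr B N (F y))"
proof -
  interpret A: prob_space A by fact
  interpret B: prob_space B by fact
  interpret AB: pair_sigma_finite A B ..
  have F': "case_prod F \<in> (Y \<Otimes>\<^sub>M B) \<rightarrow>\<^sub>M N"
    using F by (simp add: case_prod_beta')
  have K: "(\<lambda>y. distr B N (F y)) \<in> Y \<rightarrow>\<^sub>M subprob_algebra N"
    using B by (intro measurable_distr2[OF F' measurable_const])
      (simp add: space_subprob_algebra prob_space_imp_subprob_space)
  have G: "(\<lambda>p. F (h (fst p)) (snd p)) \<in> (A \<Otimes>\<^sub>M B) \<rightarrow>\<^sub>M N"
  proof -
    have "(\<lambda>p. (h (fst p), snd p)) \<in> (A \<Otimes>\<^sub>M B) \<rightarrow>\<^sub>M (Y \<Otimes>\<^sub>M B)"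
      using h by (intro measurable_Pair) (auto intro: measurable_compose[OF measurable_fst])
    from measurable_compose[OF this F] show ?thesis
      by simp
  qed
  have ne: "space (distr A Y h) \<noteq> {}"
    using A.not_empty measurable_space[OF h] by auto
  show ?thesis
  proof (rule measure_eqI)
    show "sets (distr (A \<Otimes>\<^sub>M B) N (\<lambda>p. F (h (fst p)) (snd p))) = sets (distr A Y h \<bind> (\<lambda>y. distr B N (F y)))"
      by (subst sets_bind[OF _ ne]) auto
  next
    fix X
    assume "X \<in> sets (distr (A \<Otimes>\<^sub>M B) N (\<lambda>p. F (h (fst p)) (snd p)))"
    then have X: "X \<in> sets N"
      by simp
    have "emeasure (distr A Y h \<bind> (\<lambda>y. distr B N (F y))) X
        = (\<integral>\<^sup>+y. emeasure (distr B N (F y)) X \<partial>distr A Y h)"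
      by (rule emeasure_bind[OF ne _ X]) (use K in simp)
    also have "\<dots> = (\<integral>\<^sup>+a. emeasure (distr B N (F (h a))) X \<partial>A)"
      by (rule nn_integral_distr[OF h]) (use K X in simp)
    also have "\<dots> = (\<integral>\<^sup>+a. emeasure B (Pair a -` ((\<lambda>p. F (h (fst p)) (snd p)) -` X \<inter> space (A \<Otimes>\<^sub>M B))) \<partial>A)"
    proof (rule nn_integral_cong)
      fix a
      assume a: "a \<in> space A"
      have "F (h a) \<in> B \<rightarrow>\<^sub>M N"
        using measurable_Pair2[OF F' measurable_space[OF h a]] by simp
      moreover have "Pair a -` ((\<lambda>p. F (h (fst p)) (snd p)) -` X \<inter> space (A \<Otimes>\<^sub>M B)) = F (h a) -` X \<inter> space B"
        using a by (auto simp: space_pair_measure)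
      ultimately show "emeasure (distr B N (F (h a))) X = emeasure B (Pair a -` ((\<lambda>p. F (h (fst p)) (snd p)) -` X \<inter> space (A \<Otimes>\<^sub>M B)))"
        using X by (simp add: emeasure_distr)
    qed
    also have "\<dots> = emeasure (A \<Otimes>\<^sub>M B) ((\<lambda>p. F (h (fst p)) (snd p)) -` X \<inter> space (A \<Otimes>\<^sub>M B))"
      by (rule B.emeasure_pair_measure_alt[symmetric]) (use G X in simp)
    also have "\<dots> = emeasure (distr (A \<Otimes>\<^sub>M B) N (\<lambda>p. F (h (fst p)) (snd p))) X"
      by (rule emeasure_distr[symmetric, OF G X])
    finally show "emeasure (distr (A \<Otimes>\<^sub>M B) N (\<lambda>p. F (h (fst p)) (snd p))) X
        = emeasure (distr A Y h \<bind> (\<lambda>y. distr B N (F y))) X" ..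
  qed
qed

lemma prob_space_PiM_empty_eqI:
  assumes "prob_space M1" "prob_space M2" "sets M1 = sets (PiM {} N)" "sets M2 = sets (PiM {} N)"
  shows "M1 = M2"
proof (rule measure_eqI)
  show "sets M1 = sets M2"
    using assms by simp
  interpret M1: prob_space M1 by fact
  interpret M2: prob_space M2 by fact
  fix A
  assume A: "A \<in> sets M1"
  have "space M1 = {\<lambda>k. undefined}" "space M2 = {\<lambda>k. undefined}"
    using sets_eq_imp_space_eq[OF assms(3)] sets_eq_imp_space_eq[OF assms(4)]
    by (simp_all add: space_PiM)
  moreover have "A \<subseteq> space M1"
    using A by (rule sets.sets_into_space)
  ultimately have "A = {} \<or> A = space M1 \<and> A = space M2"
    by auto
  then show "emeasure M1 A = emeasure M2 A"
    using M1.emeasure_space_1 M2.emeasure_space_1 by auto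
qed

lemma measurable_Rd_add:
  assumes "g1 \<in> M \<rightarrow>\<^sub>M (Rd :: ('d::finite \<Rightarrow> real) measure)" "g2 \<in> M \<rightarrow>\<^sub>M Rd"
  shows "(\<lambda>x. \<lambda>i. g1 x i + g2 x i) \<in> M \<rightarrow>\<^sub>M Rd"
proof -
  have component: "(\<lambda>x. g x i) \<in> M \<rightarrow>\<^sub>M borel" if "g \<in> M \<rightarrow>\<^sub>M (Rd :: ('d \<Rightarrow> real) measure)" for g i
    using measurable_compose[OF that measurable_component_singleton[of i UNIV]] by simp
  have "(\<lambda>x. \<lambda>i\<in>UNIV. g1 x i + g2 x i) \<in> M \<rightarrow>\<^sub>M Rd"
    using assms by (intro measurable_restrict borel_measurable_add component) auto
  then show ?thesis
    by (simp add: restrict_UNIV)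
qed

lemma measurable_sum_coordinates:
  assumes "finite A" "A \<subseteq> I"
  shows "(\<lambda>\<omega>. \<Sum>k\<in>A. \<omega> k) \<in> PiM I (\<lambda>_. borel) \<rightarrow>\<^sub>M (borel :: real measure)"
  using assms by (intro borel_measurable_sum measurable_component_singleton) auto

lemma distr_restrict_self:
  assumes "sets M = sets (PiM I N)"
  shows "distr M (PiM I N) (\<lambda>z. restrict z I) = M"
proof -
  have "distr M (PiM I N) (\<lambda>z. restrict z I) = distr M M (\<lambda>z. z)"
    using sets_eq_imp_space_eq[OF assms] assms
    by (intro distr_cong) (auto simp: space_PiM PiE_def extensional_restrict)
  then show ?thesis
    by simp
qed

section \<open>Noise built from independent increments\<close>

text \<open>The dummy law \<open>return borel 0\<close> outside \<open>S\<close> only makes the family a product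
  of probability spaces.\<close>
definition increment_law ::
    "(real \<Rightarrow> real measure) \<Rightarrow> (real \<Rightarrow> real \<Rightarrow> real measure) \<Rightarrow> real set \<Rightarrow> real \<Rightarrow> real measure"
  where "increment_law D C S s =
    (if s \<notin> S then return borel 0 else if s = Max S then D s else C (next_in S s) s)"

definition increments ::
    "(real \<Rightarrow> real measure) \<Rightarrow> (real \<Rightarrow> real \<Rightarrow> real measure) \<Rightarrow> real set \<Rightarrow> (real \<times> 'd \<Rightarrow> real) measure"
  where "increments D C S = PiM (S \<times> UNIV) (\<lambda>k. increment_law D C S (fst k))"

definition noise_at :: "real set \<Rightarrow> (real \<times> 'd \<Rightarrow> real) \<Rightarrow> real \<Rightarrow> 'd \<Rightarrow> real"
  where "noise_at S \<omega> \<rho> i = (\<Sum>s\<in>{s \<in> S. \<rho> \<le> s}. \<omega> (s, i))"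

definition noise ::
    "(real \<Rightarrow> real measure) \<Rightarrow> (real \<Rightarrow> real \<Rightarrow> real measure) \<Rightarrow> real set \<Rightarrow> (real \<Rightarrow> 'd::finite \<Rightarrow> real) measure"
  where "noise D C S = distr (increments D C S) (PiM S (\<lambda>_. Rd)) (\<lambda>\<omega>. \<lambda>\<rho>\<in>S. noise_at S \<omega> \<rho>)"

lemma measurable_noise_at:
  assumes "finite S"
  shows "(\<lambda>\<omega>. noise_at S \<omega> \<rho>) \<in> PiM (S \<times> UNIV) (\<lambda>_. borel) \<rightarrow>\<^sub>M (Rd :: ('d::finite \<Rightarrow> real) measure)"
proof -
  have "(\<lambda>\<omega>. \<lambda>i\<in>UNIV. noise_at S \<omega> \<rho> i) \<in> PiM (S \<times> (UNIV :: 'd set)) (\<lambda>_. borel) \<rightarrow>\<^sub>M Rd"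
  proof (rule measurable_restrict)
    fix i :: 'd
    have "(\<lambda>\<omega>. \<Sum>k\<in>(\<lambda>s. (s, i)) ` {s \<in> S. \<rho> \<le> s}. \<omega> k)
        \<in> PiM (S \<times> (UNIV :: 'd set)) (\<lambda>_. borel) \<rightarrow>\<^sub>M (borel :: real measure)"
      using assms by (intro measurable_sum_coordinates) auto
    moreover have "(\<Sum>k\<in>(\<lambda>s. (s, i)) ` {s \<in> S. \<rho> \<le> s}. \<omega> k) = noise_at S \<omega> \<rho> i" for \<omega>
      unfolding noise_at_def by (subst sum.reindex) (auto simp: inj_on_def)
    ultimately show "(\<lambda>\<omega>. noise_at S \<omega> \<rho> i) \<in> PiM (S \<times> (UNIV :: 'd set)) (\<lambda>_. borel) \<rightarrow>\<^sub>M borel"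
      by simp
  qed
  then show ?thesis
    by (simp add: restrict_UNIV)
qed

lemma measurable_noise_vector:
  "finite S \<Longrightarrow> (\<lambda>\<omega>. \<lambda>\<rho>\<in>T. noise_at S \<omega> \<rho>)
    \<in> PiM (S \<times> UNIV) (\<lambda>_. borel) \<rightarrow>\<^sub>M PiM T (\<lambda>_. (Rd :: ('d::finite \<Rightarrow> real) measure))"
  by (intro measurable_restrict measurable_noise_at)

lemma measurable_add_noise_at:
  assumes T: "finite T" and B: "sets B = sets (PiM (T \<times> UNIV) (\<lambda>_. borel))"
    and h: "h \<in> M \<rightarrow>\<^sub>M (Rd :: ('d::finite \<Rightarrow> real) measure)"
  shows "(\<lambda>p. \<lambda>\<rho>\<in>S. \<lambda>i. h (fst p) i + noise_at T (snd p) \<rho> i) \<in> M \<Otimes>\<^sub>M B \<rightarrow>\<^sub>M PiM S (\<lambda>_. Rd)"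
proof (rule measurable_restrict)
  fix \<rho>
  have "(\<lambda>p. noise_at T (snd p) \<rho>) \<in> M \<Otimes>\<^sub>M B \<rightarrow>\<^sub>M (Rd :: ('d \<Rightarrow> real) measure)"
    using measurable_noise_at[OF T, of \<rho>]
    by (intro measurable_compose[OF measurable_snd]) (simp add: measurable_cong_sets[OF B refl])
  then show "(\<lambda>p. \<lambda>i. h (fst p) i + noise_at T (snd p) \<rho> i) \<in> M \<Otimes>\<^sub>M B \<rightarrow>\<^sub>M Rd"
    by (rule measurable_Rd_add[OF measurable_compose[OF measurable_fst h]])
qed

text \<open>Removing a level \<open>q\<close> from \<open>S\<close> adds the increment at \<open>q\<close> to the one at its predecessor,
  if there is one.\<close>
definition merged_block :: "real set \<Rightarrow> real \<Rightarrow> real \<times> 'd \<Rightarrow> (real \<times> 'd) set"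
  where "merged_block S q j = (if q \<noteq> Min S \<and> fst j = prev_in S q then {j, (q, snd j)} else {j})"

definition merge_increments :: "real set \<Rightarrow> real \<Rightarrow> (real \<times> 'd \<Rightarrow> real) \<Rightarrow> real \<times> 'd \<Rightarrow> real"
  where "merge_increments S q = (\<lambda>\<omega>. \<lambda>j\<in>(S - {q}) \<times> UNIV. \<Sum>k\<in>merged_block S q j. \<omega> k)"

lemma merged_block_subset: "q \<in> S \<Longrightarrow> j \<in> (S - {q}) \<times> UNIV \<Longrightarrow> merged_block S q j \<subseteq> S \<times> UNIV"
  by (auto simp: merged_block_def)

lemma measurable_merge_increments:
  assumes "finite S" "q \<in> S"
  shows "merge_increments S q
    \<in> PiM (S \<times> UNIV) (\<lambda>_. borel) \<rightarrow>\<^sub>M PiM ((S - {q}) \<times> UNIV) (\<lambda>_. (borel :: real measure))"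
  unfolding merge_increments_def using merged_block_subset[OF assms(2)]
  by (intro measurable_restrict measurable_sum_coordinates)
    (use assms(2) in \<open>auto simp: merged_block_def\<close>)

lemma noise_at_merge_increments:
  assumes S: "finite S" and q: "q \<in> S" and \<rho>: "\<rho> \<in> S - {q}"
  shows "noise_at (S - {q}) (merge_increments S q \<omega>) \<rho> = noise_at S \<omega> \<rho>"
proof
  fix i
  let ?p = "prev_in S q"
  have "noise_at (S - {q}) (merge_increments S q \<omega>) \<rho> i
      = (\<Sum>s\<in>{s \<in> S - {q}. \<rho> \<le> s}. \<omega> (s, i) + (if q \<noteq> Min S \<and> s = ?p then \<omega> (q, i) else 0))"
    unfolding noise_at_def merge_increments_def by (intro sum.cong) (auto simp: merged_block_def)
  also have "\<dots> = noise_at (S - {q}) \<omega> \<rho> i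
      + (\<Sum>s\<in>{s \<in> S - {q}. \<rho> \<le> s}. if q \<noteq> Min S \<and> s = ?p then \<omega> (q, i) else 0)"
    by (simp add: sum.distrib noise_at_def)
  also have "(\<Sum>s\<in>{s \<in> S - {q}. \<rho> \<le> s}. if q \<noteq> Min S \<and> s = ?p then \<omega> (q, i) else 0)
      = (if \<rho> \<le> q then \<omega> (q, i) else 0)"
  proof (cases "q = Min S")
    case False
    then show ?thesis
      using S prev_in_mem[OF S q False] le_iff_le_prev_in[OF S q, of \<rho>] \<rho> by (simp add: sum.delta)
  qed (use le_iff_le_prev_in[OF S q, of \<rho>] \<rho> in simp)
  also have "noise_at (S - {q}) \<omega> \<rho> i + (if \<rho> \<le> q then \<omega> (q, i) else 0) = noise_at S \<omega> \<rho> i"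
  proof (cases "\<rho> \<le> q")
    case True
    then have "{s \<in> S. \<rho> \<le> s} = insert q {s \<in> S - {q}. \<rho> \<le> s}"
      using q by auto
    then show ?thesis
      using True S by (simp add: noise_at_def)
  next
    case False
    then have "{s \<in> S. \<rho> \<le> s} = {s \<in> S - {q}. \<rho> \<le> s}"
      by auto
    then show ?thesis
      using False by (simp add: noise_at_def)
  qed
  finally show "noise_at (S - {q}) (merge_increments S q \<omega>) \<rho> i = noise_at S \<omega> \<rho> i" .
qed

lemma noise_at_merge_Max:
  assumes "finite S" "m \<in> S" "\<And>s. s \<in> S \<Longrightarrow> s \<le> m" "\<rho> \<in> S"
  shows "noise_at S (merge ({m} \<times> UNIV) ((S - {m}) \<times> UNIV) (\<omega>1, \<omega>2)) \<rho> i
    = \<omega>1 (m, i) + noise_at (S - {m}) \<omega>2 \<rho> i"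
proof -
  have "{s \<in> S. \<rho> \<le> s} = insert m {s \<in> S - {m}. \<rho> \<le> s}"
    using assms by auto
  then show ?thesis
    using assms(1) by (simp add: noise_at_def merge_def)
qed

locale consistent_kernels =
  fixes D :: "real \<Rightarrow> real measure" and C :: "real \<Rightarrow> real \<Rightarrow> real measure"
  assumes real_distribution_D: "\<And>\<rho>. 0 < \<rho> \<Longrightarrow> real_distribution (D \<rho>)"
    and kernels: "convolution_kernels D C"
    and consistent: "kernels_consistent_on UNIV C"
begin

lemma real_distribution_C: "0 < a \<Longrightarrow> a < b \<Longrightarrow> real_distribution (C b a)"
  and D_convolution_C: "0 < a \<Longrightarrow> a < b \<Longrightarrow> (D b \<star> C b a) = D a"
  using kernels by (auto simp: convolution_kernels_def)

lemma C_convolution: "0 < a \<Longrightarrow> a < b \<Longrightarrow> b < c \<Longrightarrow> C c a = (C c b \<star> C b a)"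
  using consistent by (auto simp: kernels_consistent_on_def)

lemma real_distribution_increment_law:
  assumes "finite S" "S \<subseteq> {0<..}"
  shows "real_distribution (increment_law D C S s)"
proof (cases "s \<in> S")
  case True
  then show ?thesis
    using assms next_in_mem[OF assms(1) True] real_distribution_D real_distribution_C
    by (auto simp: increment_law_def)
qed (auto simp: increment_law_def real_distribution_def real_distribution_axioms_def prob_space_return)

lemma sets_increments:
  assumes "finite S" "S \<subseteq> {0<..}"
  shows "sets (increments D C S :: (real \<times> 'd \<Rightarrow> real) measure) = sets (PiM (S \<times> UNIV) (\<lambda>_. borel))"
  unfolding increments_def using real_distribution_increment_law[OF assms]
  by (intro sets_PiM_cong) (auto simp: real_distribution_def real_distribution_axioms_def)

lemma prob_space_increments:
  assumes "finite S" "S \<subseteq> {0<..}"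
  shows "prob_space (increments D C S :: (real \<times> 'd \<Rightarrow> real) measure)"
  unfolding increments_def using real_distribution_increment_law[OF assms]
  by (intro prob_space_PiM) (simp add: real_distribution_def)

lemma sets_noise: "sets (noise D C S :: (real \<Rightarrow> 'd::finite \<Rightarrow> real) measure) = sets (PiM S (\<lambda>_. Rd))"
  by (simp add: noise_def)

lemma measurable_noise_vector_increments:
  assumes "finite S" "S \<subseteq> {0<..}"
  shows "(\<lambda>\<omega>. \<lambda>\<rho>\<in>T. noise_at S \<omega> \<rho>)
    \<in> increments D C S \<rightarrow>\<^sub>M PiM T (\<lambda>_. (Rd :: ('d::finite \<Rightarrow> real) measure))"
  using measurable_noise_vector[OF assms(1)]
  by (simp add: measurable_cong_sets[OF sets_increments[OF assms] refl])

lemma prob_space_noise: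
  assumes "finite S" "S \<subseteq> {0<..}"
  shows "prob_space (noise D C S :: (real \<Rightarrow> 'd::finite \<Rightarrow> real) measure)"
  unfolding noise_def
  by (intro prob_space.prob_space_distr prob_space_increments measurable_noise_vector_increments assms)

lemma increment_law_remove_prev:
  assumes S: "finite S" "S \<subseteq> {0<..}" and q: "q \<in> S" "q \<noteq> Min S"
  shows "increment_law D C (S - {q}) (prev_in S q)
    = (increment_law D C S (prev_in S q) \<star> increment_law D C S q)"
proof -
  define p where "p = prev_in S q"
  have p: "p \<in> S - {q}" "p < q" "next_in S p = q" "p \<noteq> Max S"
    using prev_in_mem[OF S(1) q] next_in_prev_in[OF S(1) q] Max_ge[OF S(1) q(1)]
    by (auto simp: p_def)
  have "0 < p"
    using p(1) S(2) by auto
  have law_p: "increment_law D C S p = C q p"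
    using p by (simp add: increment_law_def)
  have "increment_law D C (S - {q}) p = (C q p \<star> increment_law D C S q)"
  proof (cases "q = Max S")
    case True
    have "Max (S - {q}) = p"
      using Max_remove_prev[OF S(1) _ p(4)] p True by auto
    then have "increment_law D C (S - {q}) p = D p"
      using p(1) by (simp add: increment_law_def)
    also have "\<dots> = (C q p \<star> D q)"
      using D_convolution_C[OF \<open>0 < p\<close> p(2)] real_distribution_C[OF \<open>0 < p\<close> p(2)]
        real_distribution_D[of q] p(2) \<open>0 < p\<close> real_distribution_convolution_commute by auto
    finally show ?thesis
      using True q(1) by (simp add: increment_law_def)
  next
    case False
    define n where "n = next_in S q"
    have "p \<noteq> Max (S - {q})" "next_in (S - {q}) p = n"
      using next_in_remove_next[OF S(1) _ p(4) p(3) False] p(1) by (auto simp: n_def)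
    moreover have "q < n"
      using next_in_mem[OF S(1) q(1) False] by (simp add: n_def)
    ultimately have "increment_law D C (S - {q}) p = (C n q \<star> C q p)"
      using p(1) C_convolution[OF \<open>0 < p\<close> p(2)] by (simp add: increment_law_def)
    also have "\<dots> = (C q p \<star> C n q)"
      using \<open>0 < p\<close> p(2) \<open>q < n\<close>
      by (intro real_distribution_convolution_commute real_distribution_C) auto
    finally show ?thesis
      using False q(1) by (simp add: increment_law_def n_def)
  qed
  then show ?thesis
    unfolding p_def[symmetric] law_p .
qed

lemma increment_law_remove_other:
  assumes S: "finite S" and s: "s \<in> S - {q}" and not_prev: "q = Min S \<or> s \<noteq> prev_in S q"
  shows "increment_law D C (S - {q}) s = increment_law D C S s"
proof (cases "s = Max S")
  case True
  then have "Max (S - {q}) = s"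
    using s S by (intro Max_eqI) auto
  then show ?thesis
    using True s by (simp add: increment_law_def)
next
  case False
  have "next_in S s \<noteq> q"
    using next_in_eq_imp_prev_in[OF S _ False] s not_prev by auto
  with next_in_remove[OF S _ _ False this] s show ?thesis
    using False by (simp add: increment_law_def)
qed

lemma distr_merged_block_sum:
  assumes S: "finite S" "S \<subseteq> {0<..}" and q: "q \<in> S" and j: "j \<in> (S - {q}) \<times> UNIV"
  shows "distr (increments D C S :: (real \<times> 'd::finite \<Rightarrow> real) measure) borel
      (\<lambda>\<omega>. \<Sum>k\<in>merged_block S q j. \<omega> k)
    = increment_law D C (S - {q}) (fst j)"
proof -
  obtain s i where j_eq: "j = (s, i)" and s: "s \<in> S - {q}"
    using j by auto
  let ?G = "\<lambda>k. increment_law D C S (fst k)"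
  have G: "real_distribution (?G k)" for k
    by (rule real_distribution_increment_law[OF S])
  show ?thesis
  proof (cases "q \<noteq> Min S \<and> s = prev_in S q")
    case True
    have "distr (increments D C S) borel (\<lambda>\<omega>. \<Sum>k\<in>merged_block S q j. \<omega> k)
        = distr (PiM (S \<times> UNIV) ?G) borel (\<lambda>\<omega>. \<omega> (s, i) + \<omega> (q, i))"
      using True s by (simp add: increments_def merged_block_def j_eq)
    also have "\<dots> = (?G (s, i) \<star> ?G (q, i))"
      by (rule distr_PiM_add_coordinates[OF _ G]) (use S(1) s q in auto)
    also have "\<dots> = increment_law D C (S - {q}) s"
      using increment_law_remove_prev[OF S q] True by simp
    finally show ?thesis
      by (simp add: j_eq)
  next
    case False
    have sets_law: "sets (increment_law D C S t) = sets borel" for t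
      using real_distribution_increment_law[OF S, of t]
      by (simp add: real_distribution_def real_distribution_axioms_def)
    have "distr (increments D C S) borel (\<lambda>\<omega>. \<Sum>k\<in>merged_block S q j. \<omega> k)
        = distr (PiM (S \<times> UNIV) ?G) (?G (s, i)) (\<lambda>\<omega>. \<omega> (s, i))"
      by (rule distr_cong) (use False in \<open>auto simp: increments_def merged_block_def j_eq sets_law\<close>)
    also have "\<dots> = ?G (s, i)"
      by (rule distr_PiM_component) (use G s in \<open>auto simp: real_distribution_def\<close>)
    also have "\<dots> = increment_law D C (S - {q}) s"
      using increment_law_remove_other[OF S(1) s] False by auto
    finally show ?thesis
      by (simp add: j_eq)
  qed
qed

lemma distr_merge_increments:
  assumes S: "finite S" "S \<subseteq> {0<..}" and q: "q \<in> S" and ne: "S - {q} \<noteq> {}"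
  shows "distr (increments D C S) (PiM ((S - {q}) \<times> UNIV) (\<lambda>_. borel)) (merge_increments S q)
    = (increments D C (S - {q}) :: (real \<times> 'd::finite \<Rightarrow> real) measure)"
proof -
  have "distr (increments D C S) (PiM ((S - {q}) \<times> UNIV) (\<lambda>_. borel)) (merge_increments S q)
      = PiM ((S - {q}) \<times> UNIV)
          (\<lambda>j. distr (increments D C S) borel (\<lambda>\<omega>. \<Sum>k\<in>merged_block S q j. \<omega> (k :: real \<times> 'd)))"
    unfolding increments_def merge_increments_def
  proof (rule distr_PiM_block_sums)
    show "finite (S \<times> (UNIV :: 'd set))" "S \<times> (UNIV :: 'd set) \<noteq> {}" "(S - {q}) \<times> (UNIV :: 'd set) \<noteq> {}"
      using S q ne by auto
    show "real_distribution (increment_law D C S (fst k))" for k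
      by (rule real_distribution_increment_law[OF S])
    show "merged_block S q j \<subseteq> S \<times> UNIV" if "j \<in> (S - {q}) \<times> UNIV" for j
      by (rule merged_block_subset[OF q that])
    show "disjoint_family_on (merged_block S q) ((S - {q}) \<times> (UNIV :: 'd set))"
      unfolding disjoint_family_on_def by (auto simp: merged_block_def)
  qed
  also have "\<dots> = increments D C (S - {q})"
    unfolding increments_def[of D C "S - {q}"]
    by (rule PiM_cong) (auto simp: distr_merged_block_sum[OF S q])
  finally show ?thesis .
qed

lemma noise_remove:
  assumes S: "finite S" "S \<subseteq> {0<..}" and q: "q \<in> S" and ne: "S - {q} \<noteq> {}"
  shows "distr (noise D C S) (PiM (S - {q}) (\<lambda>_. Rd)) (\<lambda>z. restrict z (S - {q}))
    = (noise D C (S - {q}) :: (real \<Rightarrow> 'd::finite \<Rightarrow> real) measure)"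
proof -
  let ?S' = "S - {q}"
  have restrict_meas: "(\<lambda>z. restrict z ?S') \<in> PiM S (\<lambda>_. Rd) \<rightarrow>\<^sub>M PiM ?S' (\<lambda>_. (Rd :: ('d \<Rightarrow> real) measure))"
    by (rule measurable_restrict_subset) auto
  have merge_meas: "merge_increments S q \<in> increments D C S \<rightarrow>\<^sub>M PiM (?S' \<times> UNIV) (\<lambda>_. borel)"
    using measurable_merge_increments[OF S(1) q]
    by (simp add: measurable_cong_sets[OF sets_increments[OF S] refl])
  have "distr (noise D C S :: (real \<Rightarrow> 'd \<Rightarrow> real) measure) (PiM ?S' (\<lambda>_. Rd)) (\<lambda>z. restrict z ?S')
      = distr (increments D C S) (PiM ?S' (\<lambda>_. Rd)) ((\<lambda>z. restrict z ?S') \<circ> (\<lambda>\<omega>. \<lambda>\<rho>\<in>S. noise_at S \<omega> \<rho>))"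
    unfolding noise_def
    by (rule distr_distr[OF restrict_meas measurable_noise_vector_increments[OF S]])
  also have "\<dots> = distr (increments D C S) (PiM ?S' (\<lambda>_. Rd))
      ((\<lambda>\<omega>. \<lambda>\<rho>\<in>?S'. noise_at ?S' \<omega> \<rho>) \<circ> merge_increments S q)"
    by (intro distr_cong) (auto simp: restrict_def fun_eq_iff noise_at_merge_increments[OF S(1) q])
  also have "\<dots> = distr (distr (increments D C S) (PiM (?S' \<times> UNIV) (\<lambda>_. borel)) (merge_increments S q))
      (PiM ?S' (\<lambda>_. Rd)) (\<lambda>\<omega>. \<lambda>\<rho>\<in>?S'. noise_at ?S' \<omega> \<rho>)"
    using S(1) by (intro distr_distr[symmetric] measurable_noise_vector merge_meas) auto
  also have "\<dots> = noise D C ?S'"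
    by (simp add: distr_merge_increments[OF S q ne] noise_def)
  finally show ?thesis .
qed

lemma noise_restrict:
  assumes S: "finite S" "S \<subseteq> {0<..}" and T: "T \<subseteq> S"
  shows "distr (noise D C S) (PiM T (\<lambda>_. Rd)) (\<lambda>z. restrict z T)
    = (noise D C T :: (real \<Rightarrow> 'd::finite \<Rightarrow> real) measure)"
proof (cases "T = {}")
  case True
  show ?thesis
  proof (rule prob_space_PiM_empty_eqI)
    show "prob_space (distr (noise D C S) (PiM T (\<lambda>_. Rd)) (\<lambda>z. restrict z T))"
      using S T by (intro prob_space.prob_space_distr prob_space_noise)
        (auto simp: measurable_cong_sets[OF sets_noise refl] intro: measurable_restrict_subset)
    show "prob_space (noise D C T :: (real \<Rightarrow> 'd \<Rightarrow> real) measure)"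
      using S T finite_subset by (intro prob_space_noise) auto
  qed (simp_all add: True sets_noise)
next
  case False
  show ?thesis
    using S T
  proof (induction "card (S - T)" arbitrary: S rule: less_induct)
    case less
    show ?case
    proof (cases "S = T")
      case True
      then show ?thesis
        by (simp add: distr_restrict_self sets_noise)
    next
      case False
      then obtain q where q: "q \<in> S" "q \<notin> T"
        using less.prems by auto
      have T_sub: "T \<subseteq> S - {q}" and ne: "S - {q} \<noteq> {}"
        using less.prems q \<open>T \<noteq> {}\<close> by auto
      have "card (S - {q} - T) < card (S - T)"
        using q less.prems(1) by (intro psubset_card_mono) auto
      then have IH: "distr (noise D C (S - {q})) (PiM T (\<lambda>_. Rd)) (\<lambda>z. restrict z T)
          = (noise D C T :: (real \<Rightarrow> 'd \<Rightarrow> real) measure)"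
        using less.prems T_sub by (intro less.hyps) auto
      have "distr (noise D C S :: (real \<Rightarrow> 'd \<Rightarrow> real) measure) (PiM T (\<lambda>_. Rd)) (\<lambda>z. restrict z T)
          = distr (distr (noise D C S) (PiM (S - {q}) (\<lambda>_. Rd)) (\<lambda>z. restrict z (S - {q})))
              (PiM T (\<lambda>_. Rd)) (\<lambda>z. restrict z T)"
        using T_sub
        by (subst distr_distr) (auto simp: measurable_cong_sets[OF sets_noise refl] Int_absorb1
            intro!: measurable_restrict_subset distr_cong)
      also have "\<dots> = noise D C T"
        by (simp add: noise_remove[OF less.prems(1,2) q(1) ne] IH)
      finally show ?thesis .
    qed
  qed
qed

lemma noise_component:
  assumes S: "finite S" "S \<subseteq> {0<..}" and \<rho>: "\<rho> \<in> S"
  shows "distr (noise D C S) Rd (\<lambda>z. z \<rho>) = PiM UNIV (\<lambda>_::'d::finite. D \<rho>)"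
proof -
  have \<rho>S: "finite {\<rho>}" "{\<rho>} \<subseteq> {0<..}"
    using S \<rho> by auto
  let ?G = "\<lambda>k::real \<times> 'd. increment_law D C {\<rho>} (fst k)"
  have G: "prob_space (?G k)" for k
    using real_distribution_increment_law[OF \<rho>S] by (simp add: real_distribution_def)
  have "distr (noise D C S) Rd (\<lambda>z. z \<rho>)
      = distr (distr (noise D C S) (PiM {\<rho>} (\<lambda>_. Rd)) (\<lambda>z. restrict z {\<rho>})) Rd (\<lambda>z. z \<rho>)"
    using \<rho> by (subst distr_distr)
      (auto simp: measurable_cong_sets[OF sets_noise refl] intro!: measurable_restrict_subset distr_cong)
  also have "\<dots> = distr (noise D C {\<rho>}) Rd (\<lambda>z. z \<rho>)"
    using \<rho> by (simp add: noise_restrict[OF S, of "{\<rho>}"])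
  also have "\<dots> = distr (increments D C {\<rho>}) Rd (\<lambda>\<omega>. noise_at {\<rho>} \<omega> \<rho>)"
    unfolding noise_def
    by (subst distr_distr) (auto intro!: measurable_noise_vector_increments[OF \<rho>S] distr_cong)
  also have "\<dots> = distr (PiM ({\<rho>} \<times> UNIV) ?G) (PiM UNIV (\<lambda>i. ?G (\<rho>, i))) (\<lambda>\<omega>. \<lambda>i\<in>UNIV. \<omega> (\<rho>, i))"
  proof (rule distr_cong)
    have "{s. s = \<rho> \<and> \<rho> \<le> s} = {\<rho>}"
      by auto
    then show "noise_at {\<rho>} \<omega> \<rho> = (\<lambda>i\<in>UNIV. \<omega> (\<rho>, i))" for \<omega> :: "real \<times> 'd \<Rightarrow> real"
      by (simp add: noise_at_def fun_eq_iff)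
  qed (use real_distribution_increment_law[OF \<rho>S] in
      \<open>auto simp: increments_def real_distribution_def real_distribution_axioms_def intro!: sets_PiM_cong\<close>)
  also have "\<dots> = PiM UNIV (\<lambda>i. ?G (\<rho>, i))"
    using G by (intro distr_PiM_reindex) (auto simp: inj_on_def)
  also have "\<dots> = PiM UNIV (\<lambda>_. D \<rho>)"
    by (simp add: increment_law_def)
  finally show ?thesis .
qed

lemma increments_eq_distr_merge:
  assumes S: "finite S" "S \<subseteq> {0<..}" and IJ: "I \<union> J = S \<times> UNIV" "I \<inter> J = {}"
  shows "(increments D C S :: (real \<times> 'd::finite \<Rightarrow> real) measure) = distr
    (PiM I (\<lambda>k. increment_law D C S (fst k)) \<Otimes>\<^sub>M PiM J (\<lambda>k. increment_law D C S (fst k)))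
    (PiM (S \<times> UNIV) (\<lambda>k. increment_law D C S (fst k))) (merge I J)"
proof -
  interpret G: product_prob_space "\<lambda>k::real \<times> 'd. increment_law D C S (fst k)"
    using real_distribution_increment_law[OF S]
    by (intro product_prob_spaceI) (simp add: real_distribution_def)
  have "finite I" "finite J"
    using S(1) IJ(1) finite_subset[of _ "S \<times> (UNIV :: 'd set)"] by auto
  with G.distr_merge[OF IJ(2)] show ?thesis
    by (simp add: increments_def IJ(1))
qed

lemma distr_top_increment:
  assumes S: "finite S" "S \<subseteq> {0<..}" "S \<noteq> {}"
  shows "distr (PiM ({Max S} \<times> UNIV) (\<lambda>k. increment_law D C S (fst k))) Rd (\<lambda>\<omega> i. \<omega> (Max S, i))
    = PiM UNIV (\<lambda>_::'d::finite. D (Max S))"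
proof -
  let ?G = "\<lambda>k::real \<times> 'd. increment_law D C S (fst k)"
  have law: "prob_space (increment_law D C S s)" "sets (increment_law D C S s) = sets borel" for s
    using real_distribution_increment_law[OF S(1,2), of s]
    by (simp_all add: real_distribution_def real_distribution_axioms_def)
  have "distr (PiM ({Max S} \<times> UNIV) ?G) Rd (\<lambda>\<omega> i. \<omega> (Max S, i))
      = distr (PiM ({Max S} \<times> UNIV) ?G) (PiM UNIV (\<lambda>i. ?G (Max S, i))) (\<lambda>\<omega>. \<lambda>i\<in>UNIV. \<omega> (Max S, i))"
    by (rule distr_cong) (auto simp: law intro!: sets_PiM_cong)
  also have "\<dots> = PiM UNIV (\<lambda>i. ?G (Max S, i))"
    using law by (intro distr_PiM_reindex) (auto simp: inj_on_def)
  also have "\<dots> = PiM UNIV (\<lambda>_. D (Max S))"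
    using S by (simp add: increment_law_def)
  finally show ?thesis .
qed

lemma measurable_top_increment:
  assumes S: "finite S" "S \<subseteq> {0<..}"
  shows "(\<lambda>\<omega> i. \<omega> (m, i))
    \<in> PiM ({m} \<times> UNIV) (\<lambda>k. increment_law D C S (fst k)) \<rightarrow>\<^sub>M (Rd :: ('d::finite \<Rightarrow> real) measure)"
proof -
  let ?A = "PiM ({m} \<times> (UNIV :: 'd set)) (\<lambda>k. increment_law D C S (fst k))"
  have sets_A: "sets ?A = sets (PiM ({m} \<times> UNIV) (\<lambda>_. borel))"
    using real_distribution_increment_law[OF S]
    by (intro sets_PiM_cong) (simp_all add: real_distribution_def real_distribution_axioms_def)
  have "(\<lambda>\<omega>. \<lambda>i\<in>UNIV. \<omega> (m, i)) \<in> PiM ({m} \<times> UNIV) (\<lambda>_. borel) \<rightarrow>\<^sub>M (Rd :: ('d \<Rightarrow> real) measure)"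
    by (rule measurable_restrict) auto
  then show ?thesis
    by (simp add: measurable_cong_sets[OF sets_A refl] restrict_UNIV)
qed

lemma pair_top_increment:
  assumes S: "finite S" "S \<subseteq> {0<..}" "S \<noteq> {}" and B: "prob_space B"
  shows "PiM UNIV (\<lambda>_::'d::finite. D (Max S)) \<Otimes>\<^sub>M B = distr
    (PiM ({Max S} \<times> UNIV) (\<lambda>k. increment_law D C S (fst k)) \<Otimes>\<^sub>M B) (Rd \<Otimes>\<^sub>M B)
    (\<lambda>(\<omega>, y). (\<lambda>i. \<omega> (Max S, i), y))"
  using pair_measure_distr[OF measurable_top_increment[OF S(1,2), of "Max S"]
      measurable_ident_sets[OF refl, of B]] B
  by (simp add: distr_top_increment[OF S] prob_space_imp_sigma_finite)

lemma distr_noise_split_Max: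
  assumes S: "finite S" "S \<subseteq> {0<..}" "S \<noteq> {}" and g: "g \<in> PiM S (\<lambda>_. Rd) \<rightarrow>\<^sub>M N"
  shows "distr (noise D C S) N g = distr
    (PiM UNIV (\<lambda>_. D (Max S)) \<Otimes>\<^sub>M PiM ((S - {Max S}) \<times> UNIV) (\<lambda>k. increment_law D C S (fst k)))
    N (\<lambda>(v, \<omega>). g (\<lambda>\<rho>\<in>S. \<lambda>i::'d::finite. v i + noise_at (S - {Max S}) \<omega> \<rho> i))"
proof -
  define m where "m = Max S"
  have m: "m \<in> S" "\<And>s. s \<in> S \<Longrightarrow> s \<le> m"
    using S by (auto simp: m_def)
  let ?G = "\<lambda>k::real \<times> 'd. increment_law D C S (fst k)"
  let ?I = "{m} \<times> (UNIV :: 'd set)" and ?J = "(S - {m}) \<times> (UNIV :: 'd set)"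
  define A where "A = PiM ?I ?G"
  define B where "B = PiM ?J ?G"
  define top :: "(real \<times> 'd \<Rightarrow> real) \<Rightarrow> 'd \<Rightarrow> real" where "top = (\<lambda>\<omega> i. \<omega> (m, i))"
  define F :: "('d \<Rightarrow> real) \<times> (real \<times> 'd \<Rightarrow> real) \<Rightarrow> real \<Rightarrow> 'd \<Rightarrow> real"
    where "F = (\<lambda>(v, \<omega>). \<lambda>\<rho>\<in>S. \<lambda>i. v i + noise_at (S - {m}) \<omega> \<rho> i)"
  have sets_law: "sets (increment_law D C S s) = sets borel" for s
    using real_distribution_increment_law[OF S(1,2), of s]
    by (simp add: real_distribution_def real_distribution_axioms_def)
  have IJ: "?I \<union> ?J = S \<times> UNIV" "?I \<inter> ?J = {}"
    using m by auto
  have sets_B: "sets B = sets (PiM ?J (\<lambda>_. borel))"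
    unfolding B_def by (intro sets_PiM_cong) (auto simp: sets_law)
  have B_prob: "prob_space B"
    using real_distribution_increment_law[OF S(1,2)] unfolding B_def
    by (intro prob_space_PiM) (simp add: real_distribution_def)
  have pair_law: "PiM UNIV (\<lambda>_. D m) \<Otimes>\<^sub>M B = distr (A \<Otimes>\<^sub>M B) (Rd \<Otimes>\<^sub>M B) (\<lambda>(x, y). (top x, y))"
    using pair_top_increment[OF S B_prob] by (simp add: A_def top_def m_def)
  have top_meas: "(\<lambda>(x, y). (top x, y)) \<in> A \<Otimes>\<^sub>M B \<rightarrow>\<^sub>M Rd \<Otimes>\<^sub>M B"
    unfolding case_prod_beta' using measurable_top_increment[OF S(1,2), of m]
    by (intro measurable_Pair measurable_compose[OF measurable_fst] measurable_snd)
      (simp add: A_def top_def)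
  have F_meas: "F \<in> Rd \<Otimes>\<^sub>M B \<rightarrow>\<^sub>M PiM S (\<lambda>_. Rd)"
    unfolding F_def case_prod_beta'
    using measurable_add_noise_at[of "S - {m}" B "\<lambda>x. x" Rd S] S(1) sets_B by simp
  have sets_IJ: "sets (PiM (S \<times> UNIV) ?G) = sets (PiM (S \<times> UNIV) (\<lambda>_. borel))"
    by (intro sets_PiM_cong) (auto simp: sets_law)
  have Z_meas: "(\<lambda>\<omega>. \<lambda>\<rho>\<in>S. noise_at S \<omega> \<rho>) \<in> PiM (S \<times> UNIV) ?G \<rightarrow>\<^sub>M PiM S (\<lambda>_. Rd)"
    using measurable_noise_vector[OF S(1)] by (simp add: measurable_cong_sets[OF sets_IJ refl])
  have merge_meas: "merge ?I ?J \<in> A \<Otimes>\<^sub>M B \<rightarrow>\<^sub>M PiM (S \<times> UNIV) ?G"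
    using measurable_merge[of ?I ?J ?G] by (simp add: A_def B_def IJ(1))
  have "distr (noise D C S) N g = distr (A \<Otimes>\<^sub>M B) N (g \<circ> ((\<lambda>\<omega>. \<lambda>\<rho>\<in>S. noise_at S \<omega> \<rho>) \<circ> merge ?I ?J))"
    unfolding noise_def increments_eq_distr_merge[OF S(1,2) IJ]
    by (simp add: A_def B_def distr_distr[OF Z_meas merge_meas[unfolded A_def B_def]]
        distr_distr[OF g measurable_comp[OF merge_meas[unfolded A_def B_def] Z_meas]])
  also have "\<dots> = distr (A \<Otimes>\<^sub>M B) N ((g \<circ> F) \<circ> (\<lambda>(x, y). (top x, y)))"
  proof -
    have "(\<lambda>\<rho>\<in>S. noise_at S (merge ?I ?J (\<omega>1, \<omega>2)) \<rho>) = F (top \<omega>1, \<omega>2)" for \<omega>1 \<omega>2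
      by (auto simp: F_def top_def fun_eq_iff noise_at_merge_Max[OF S(1) m])
    then show ?thesis
      by (intro distr_cong) auto
  qed
  also have "\<dots> = distr (PiM UNIV (\<lambda>_. D m) \<Otimes>\<^sub>M B) N (g \<circ> F)"
    unfolding pair_law using top_meas F_meas g
    by (intro distr_distr[symmetric] measurable_comp)
  finally show ?thesis
    by (simp add: F_def B_def m_def comp_def case_prod_beta')
qed

end

definition noisy_release :: "(real \<Rightarrow> real measure) \<Rightarrow> (real \<Rightarrow> real \<Rightarrow> real measure) \<Rightarrow> 'y measure
    \<Rightarrow> (('d::finite \<Rightarrow> real) \<Rightarrow> 'y) \<Rightarrow> ('x \<Rightarrow> 'd \<Rightarrow> real) \<Rightarrow> 'x \<Rightarrow> real set \<Rightarrow> (real \<Rightarrow> 'y) measure"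
  where "noisy_release D C Y H f x S =
    distr (noise D C S) (PiM S (\<lambda>_. Y)) (\<lambda>z. \<lambda>\<rho>\<in>S. H (\<lambda>i. f x i + z \<rho> i))"

definition release_kernel :: "(real \<Rightarrow> real measure) \<Rightarrow> (real \<Rightarrow> real \<Rightarrow> real measure) \<Rightarrow> 'y measure
    \<Rightarrow> (('d::finite \<Rightarrow> real) \<Rightarrow> 'y) \<Rightarrow> real set \<Rightarrow> 'y \<Rightarrow> (real \<Rightarrow> 'y) measure"
  where "release_kernel D C Y H S y =
    distr (PiM ((S - {Max S}) \<times> UNIV) (\<lambda>k. increment_law D C S (fst k))) (PiM S (\<lambda>_. Y))
      (\<lambda>\<omega>. \<lambda>\<rho>\<in>S. H (\<lambda>i. the_inv_into UNIV H y i + noise_at (S - {Max S}) \<omega> \<rho> i))"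

locale consistent_kernels_release = consistent_kernels D C for D C +
  fixes Y :: "'y measure" and H :: "('d::finite \<Rightarrow> real) \<Rightarrow> 'y" and f :: "'x \<Rightarrow> 'd \<Rightarrow> real"
  assumes H_meas: "H \<in> Rd \<rightarrow>\<^sub>M Y"
    and H_bij: "bij_betw H UNIV (space Y)"
    and H_inv_meas: "the_inv_into UNIV H \<in> Y \<rightarrow>\<^sub>M Rd"
begin

lemma measurable_H_shift: "(\<lambda>v. H (\<lambda>i. c i + v i)) \<in> Rd \<rightarrow>\<^sub>M Y"
proof -
  have "(\<lambda>v. \<lambda>i\<in>UNIV. c i + v i) \<in> (Rd :: ('d \<Rightarrow> real) measure) \<rightarrow>\<^sub>M Rd"
    by (rule measurable_restrict) auto
  then show ?thesis
    using measurable_compose[OF _ H_meas] by (simp add: restrict_UNIV)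
qed

lemma measurable_release_map:
  "(\<lambda>z. \<lambda>\<rho>\<in>S. H (\<lambda>i. f x i + z \<rho> i)) \<in> PiM S (\<lambda>_. Rd) \<rightarrow>\<^sub>M PiM S (\<lambda>_. Y)"
proof (rule measurable_restrict)
  fix \<rho>
  assume "\<rho> \<in> S"
  then have "(\<lambda>z. z \<rho>) \<in> PiM S (\<lambda>_. Rd) \<rightarrow>\<^sub>M (Rd :: ('d \<Rightarrow> real) measure)"
    by (rule measurable_component_singleton)
  from measurable_compose[OF this measurable_H_shift]
  show "(\<lambda>z. H (\<lambda>i. f x i + z \<rho> i)) \<in> PiM S (\<lambda>_. Rd) \<rightarrow>\<^sub>M Y" .
qed

lemma prob_space_noisy_release:
  "finite S \<Longrightarrow> S \<subseteq> {0<..} \<Longrightarrow> prob_space (noisy_release D C Y H f x S)"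
  unfolding noisy_release_def
  by (intro prob_space.prob_space_distr prob_space_noise)
    (simp_all add: measurable_cong_sets[OF sets_noise refl] measurable_release_map)

lemma sets_noisy_release: "sets (noisy_release D C Y H f x S) = sets (PiM S (\<lambda>_. Y))"
  by (simp add: noisy_release_def)

lemma noisy_release_restrict:
  assumes S: "finite S" "S \<subseteq> {0<..}" and T: "T \<subseteq> S"
  shows "distr (noisy_release D C Y H f x S) (PiM T (\<lambda>_. Y)) (\<lambda>\<omega>. restrict \<omega> T)
    = noisy_release D C Y H f x T"
proof -
  have restrict_meas: "(\<lambda>z. restrict z T) \<in> noise D C S \<rightarrow>\<^sub>M PiM T (\<lambda>_. (Rd :: ('d \<Rightarrow> real) measure))"
    using T by (simp add: measurable_cong_sets[OF sets_noise refl] measurable_restrict_subset)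
  have "distr (noisy_release D C Y H f x S) (PiM T (\<lambda>_. Y)) (\<lambda>\<omega>. restrict \<omega> T)
      = distr (noise D C S) (PiM T (\<lambda>_. Y)) ((\<lambda>\<omega>. restrict \<omega> T) \<circ> (\<lambda>z. \<lambda>\<rho>\<in>S. H (\<lambda>i. f x i + z \<rho> i)))"
    unfolding noisy_release_def using T
    by (intro distr_distr measurable_restrict_subset)
      (simp_all add: measurable_cong_sets[OF sets_noise refl] measurable_release_map)
  also have "\<dots> = distr (noise D C S) (PiM T (\<lambda>_. Y))
      ((\<lambda>z. \<lambda>\<rho>\<in>T. H (\<lambda>i. f x i + z \<rho> i)) \<circ> (\<lambda>z. restrict z T))"
    using T by (intro distr_cong) (auto simp: restrict_def fun_eq_iff)
  also have "\<dots> = distr (distr (noise D C S) (PiM T (\<lambda>_. Rd)) (\<lambda>z. restrict z T)) (PiM T (\<lambda>_. Y))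
      (\<lambda>z. \<lambda>\<rho>\<in>T. H (\<lambda>i. f x i + z \<rho> i))"
    by (rule distr_distr[symmetric, OF measurable_release_map restrict_meas])
  also have "\<dots> = noisy_release D C Y H f x T"
    by (simp add: noise_restrict[OF S T] noisy_release_def)
  finally show ?thesis .
qed

lemma noisy_release_component:
  assumes S: "finite S" "S \<subseteq> {0<..}" and \<rho>: "\<rho> \<in> S"
  shows "distr (noisy_release D C Y H f x S) Y (\<lambda>\<omega>. \<omega> \<rho>) = additive_noise_post Y H f (D \<rho>) x"
proof -
  have component: "(\<lambda>z. z \<rho>) \<in> noise D C S \<rightarrow>\<^sub>M (Rd :: ('d \<Rightarrow> real) measure)"
    using \<rho> by (simp add: measurable_cong_sets[OF sets_noise refl])
  have "distr (noisy_release D C Y H f x S) Y (\<lambda>\<omega>. \<omega> \<rho>)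
      = distr (noise D C S) Y ((\<lambda>\<omega>. \<omega> \<rho>) \<circ> (\<lambda>z. \<lambda>\<rho>\<in>S. H (\<lambda>i. f x i + z \<rho> i)))"
    unfolding noisy_release_def using \<rho>
    by (intro distr_distr)
      (simp_all add: measurable_cong_sets[OF sets_noise refl] measurable_release_map)
  also have "\<dots> = distr (noise D C S) Y ((\<lambda>v. H (\<lambda>i. f x i + v i)) \<circ> (\<lambda>z. z \<rho>))"
    using \<rho> by (intro distr_cong) auto
  also have "\<dots> = distr (distr (noise D C S) Rd (\<lambda>z. z \<rho>)) Y (\<lambda>v. H (\<lambda>i. f x i + v i))"
    by (rule distr_distr[symmetric, OF measurable_H_shift component])
  also have "\<dots> = additive_noise_post Y H f (D \<rho>) x"
    by (simp add: noise_component[OF S \<rho>] additive_noise_post_def)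
  finally show ?thesis .
qed

lemma measurable_release_kernel_map:
  assumes S: "finite S" "S \<subseteq> {0<..}"
  shows "(\<lambda>p. \<lambda>\<rho>\<in>S. H (\<lambda>i. the_inv_into UNIV H (fst p) i + noise_at (S - {Max S}) (snd p) \<rho> i))
    \<in> Y \<Otimes>\<^sub>M PiM ((S - {Max S}) \<times> UNIV) (\<lambda>k. increment_law D C S (fst k)) \<rightarrow>\<^sub>M PiM S (\<lambda>_. Y)"
proof -
  let ?B = "PiM ((S - {Max S}) \<times> (UNIV :: 'd set)) (\<lambda>k. increment_law D C S (fst k))"
  have "sets ?B = sets (PiM ((S - {Max S}) \<times> UNIV) (\<lambda>_. borel))"
    using real_distribution_increment_law[OF S]
    by (intro sets_PiM_cong) (simp_all add: real_distribution_def real_distribution_axioms_def)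
  from measurable_add_noise_at[OF _ this H_inv_meas, of S] S(1)
  have "(\<lambda>p. \<lambda>\<rho>\<in>S. \<lambda>i. the_inv_into UNIV H (fst p) i + noise_at (S - {Max S}) (snd p) \<rho> i)
      \<in> Y \<Otimes>\<^sub>M ?B \<rightarrow>\<^sub>M PiM S (\<lambda>_. Rd)"
    by simp
  moreover have "(\<lambda>z. \<lambda>\<rho>\<in>S. H (z \<rho>)) \<in> PiM S (\<lambda>_. Rd) \<rightarrow>\<^sub>M PiM S (\<lambda>_. Y)"
  proof (rule measurable_restrict)
    fix \<rho>
    assume "\<rho> \<in> S"
    from measurable_component_singleton[OF this, of "\<lambda>_. Rd"]
    show "(\<lambda>z. H (z \<rho>)) \<in> PiM S (\<lambda>_. Rd) \<rightarrow>\<^sub>M Y"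
      by (rule measurable_compose[OF _ H_meas])
  qed
  ultimately have "(\<lambda>p. (\<lambda>z. \<lambda>\<rho>\<in>S. H (z \<rho>))
      (\<lambda>\<rho>\<in>S. \<lambda>i. the_inv_into UNIV H (fst p) i + noise_at (S - {Max S}) (snd p) \<rho> i))
      \<in> Y \<Otimes>\<^sub>M ?B \<rightarrow>\<^sub>M PiM S (\<lambda>_. Y)"
    by (rule measurable_compose)
  then show ?thesis
    by (simp cong: restrict_cong)
qed

lemma measurable_release_kernel:
  assumes S: "finite S" "S \<subseteq> {0<..}"
  shows "release_kernel D C Y H S \<in> Y \<rightarrow>\<^sub>M prob_algebra (PiM S (\<lambda>_. Y))"
proof (rule measurable_prob_algebraI)
  have B: "prob_space (PiM ((S - {Max S}) \<times> (UNIV :: 'd set)) (\<lambda>k. increment_law D C S (fst k)))"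
    using real_distribution_increment_law[OF S]
    by (intro prob_space_PiM) (simp add: real_distribution_def)
  show "prob_space (release_kernel D C Y H S y)" if "y \<in> space Y" for y
    unfolding release_kernel_def using measurable_Pair2[OF measurable_release_kernel_map[OF S] that] B
    by (intro prob_space.prob_space_distr) simp_all
  show "release_kernel D C Y H S \<in> Y \<rightarrow>\<^sub>M subprob_algebra (PiM S (\<lambda>_. Y))"
    unfolding release_kernel_def using measurable_release_kernel_map[OF S] B
    by (intro measurable_distr2[OF _ measurable_const])
      (simp_all add: case_prod_beta' space_subprob_algebra prob_space_imp_subprob_space)
qed

lemma noisy_release_eq_bind:
  assumes S: "finite S" "S \<subseteq> {0<..}" "S \<noteq> {}"
  shows "noisy_release D C Y H f x S = additive_noise_post Y H f (D (Max S)) x \<bind> release_kernel D C Y H S"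
proof -
  let ?m = "Max S"
  let ?A = "PiM UNIV (\<lambda>_::'d. D ?m)" and ?B = "PiM ((S - {?m}) \<times> UNIV) (\<lambda>k. increment_law D C S (fst k))"
  let ?out = "\<lambda>y \<omega>. \<lambda>\<rho>\<in>S. H (\<lambda>i. the_inv_into UNIV H y i + noise_at (S - {?m}) \<omega> \<rho> i)"
  have "0 < ?m"
    using S Max_in by auto
  then have D_m: "prob_space (D ?m)" "sets (D ?m) = sets borel"
    using real_distribution_D[of ?m]
    by (simp_all add: real_distribution_def real_distribution_axioms_def)
  have A: "prob_space ?A"
    using D_m by (intro prob_space_PiM) auto
  have B: "prob_space ?B"
    using real_distribution_increment_law[OF S(1,2)]
    by (intro prob_space_PiM) (simp add: real_distribution_def)
  have sets_A: "sets ?A = sets Rd"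
    using D_m by (intro sets_PiM_cong) simp_all
  have shift: "(\<lambda>v. H (\<lambda>i. f x i + v i)) \<in> ?A \<rightarrow>\<^sub>M Y"
    using measurable_H_shift by (simp add: measurable_cong_sets[OF sets_A refl])
  have H_inv: "the_inv_into UNIV H (H v) = v" for v
    using bij_betw_imp_inj_on[OF H_bij] by (rule the_inv_into_f_f) simp
  have "noisy_release D C Y H f x S = distr (?A \<Otimes>\<^sub>M ?B) (PiM S (\<lambda>_. Y))
      (\<lambda>(v, \<omega>). (\<lambda>z. \<lambda>\<rho>\<in>S. H (\<lambda>i. f x i + z \<rho> i)) (\<lambda>\<rho>\<in>S. \<lambda>i. v i + noise_at (S - {?m}) \<omega> \<rho> i))"
    unfolding noisy_release_def by (rule distr_noise_split_Max[OF S measurable_release_map])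
  also have "\<dots> = distr (?A \<Otimes>\<^sub>M ?B) (PiM S (\<lambda>_. Y)) (\<lambda>p. ?out (H (\<lambda>i. f x i + fst p i)) (snd p))"
    by (rule distr_cong) (auto simp: H_inv add.assoc cong: restrict_cong)
  also have "\<dots> = distr ?A Y (\<lambda>v. H (\<lambda>i. f x i + v i)) \<bind> release_kernel D C Y H S"
    unfolding release_kernel_def
    by (rule distr_pair_measure_eq_bind[OF A B shift measurable_release_kernel_map[OF S(1,2)]])
  finally show ?thesis
    by (simp add: additive_noise_post_def)
qed

lemma implements_lossless_noisy_release:
  assumes M: "\<And>\<rho> x. 0 < \<rho> \<Longrightarrow> M \<rho> x = additive_noise_post Y H f (D \<rho>) x"
  shows "implements_lossless Y M (\<lambda>x qs. noisy_release D C Y H f x (set qs))"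
  unfolding implements_lossless_def is_implementation_def
proof (intro conjI allI impI)
  fix x qs
  assume "valid_queries qs"
  then have qs: "finite (set qs)" "set qs \<subseteq> {0<..}"
    by (auto simp: valid_queries_def)
  then show "prob_space (noisy_release D C Y H f x (set qs))"
    by (rule prob_space_noisy_release)
  show "sets (noisy_release D C Y H f x (set qs)) = sets (PiM (set qs) (\<lambda>_. Y))"
    by (rule sets_noisy_release)
  show "distr (noisy_release D C Y H f x (set qs)) Y (\<lambda>\<omega>. \<omega> \<rho>) = M \<rho> x" if "\<rho> \<in> set qs" for \<rho>
    using noisy_release_component[OF qs that] M[of \<rho> x] qs(2) that by auto
next
  fix x qs q
  assume "valid_queries (qs @ [q])"
  then have "finite (set (qs @ [q]))" "set (qs @ [q]) \<subseteq> {0<..}"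
    by (auto simp: valid_queries_def)
  from noisy_release_restrict[OF this, of "set qs"]
  show "distr (noisy_release D C Y H f x (set (qs @ [q]))) (PiM (set qs) (\<lambda>_. Y)) (\<lambda>\<omega>. restrict \<omega> (set qs))
      = noisy_release D C Y H f x (set qs)"
    by auto
next
  fix S :: "real set"
  assume S: "finite S" "S \<noteq> {}" "\<forall>\<rho>\<in>S. 0 < \<rho>"
  then have pos: "S \<subseteq> {0<..}"
    by auto
  have "noisy_release D C Y H f x S
      = distr (noisy_release D C Y H f x S) Y (\<lambda>\<omega>. \<omega> (Max S)) \<bind> release_kernel D C Y H S" for x
    unfolding noisy_release_component[OF S(1) pos Max_in[OF S(1,2)]]
    by (rule noisy_release_eq_bind[OF S(1) pos S(2)])
  then show "\<exists>K. K \<in> Y \<rightarrow>\<^sub>M prob_algebra (PiM S (\<lambda>_. Y)) \<and> (\<forall>x qs. distinct qs \<longrightarrow> set qs = S \<longrightarrow>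
      noisy_release D C Y H f x (set qs)
        = distr (noisy_release D C Y H f x (set qs)) Y (\<lambda>\<omega>. \<omega> (Max S)) \<bind> K)"
    using measurable_release_kernel[OF S(1) pos] by auto
qed

end

theorem theorem4p4:
  fixes Y :: "'y measure"
    and M :: "real \<Rightarrow> 'x \<Rightarrow> 'y measure"
    and D :: "real \<Rightarrow> real measure"
    and f :: "'x \<Rightarrow> 'd::finite \<Rightarrow> real"
    and H :: "('d \<Rightarrow> real) \<Rightarrow> 'y"
  assumes D_distr: "\<And>\<rho>. 0 < \<rho> \<Longrightarrow> real_distribution (D \<rho>)"
    and D_preorder: "convolution_preorder D"
    and H_meas: "H \<in> Rd \<rightarrow>\<^sub>M Y"
    and H_bij: "bij_betw H UNIV (space Y)"
    and H_inv_meas: "the_inv_into UNIV H \<in> Y \<rightarrow>\<^sub>M Rd"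
    and M_decomp: "\<And>\<rho> x. 0 < \<rho> \<Longrightarrow> M \<rho> x = additive_noise_post Y H f (D \<rho>) x"
  shows "lossless_multiple_release Y M"
proof -
  obtain C where "convolution_kernels D C" "kernels_consistent_on UNIV C"
    using consistent_convolution_kernels_exist[OF D_distr D_preorder] by blast
  then interpret consistent_kernels_release D C Y H f
    using D_distr H_meas H_bij H_inv_meas
    by (simp add: consistent_kernels_release_def consistent_kernels_def
        consistent_kernels_release_axioms_def)
  show ?thesis
    unfolding lossless_multiple_release_def
    using implements_lossless_noisy_release[OF M_decomp] by blast
qed

end
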